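(* Let $n\ge 2$ and $m\in\mathbb{N}$. Let $$\mathrm{dom}(\mathcal{L})=\Big\{(d,b)\in\mathbb{R}^m\times\mathbb{R}^m:\ d_j>0,\ b_j>0,\ \sum_{j=1}^m b_j<1,\ \sigma_1<\sigma_2<\dots<\sigma_m\Big\},$$ where $\sigma_j=\kappa d_j^{n-2}/(4b_j)$ if $n>2$ and $\sigma_j=\pi d_j/(2b_j)$ if $n=2$, and let $\mathcal{L}(d,b)=(\sigma,\mu)$ with $\sigma=(\sigma_1,\dots,\sigma_m)$ and $\mu=(\mu_1,\dots,\mu_m)$, where $\mu_1<\dots<\mu_m$ are the roots of $$1+\sum_{j=1}^m\frac{\sigma_j b_j}{(1-\sum_{i=1}^m b_i)(\sigma_j-\lambda)}=0.$$ Then $\mathcal{L}$ is a bijection of $\mathrm{dom}(\mathcal{L})$ onto $$\mathcal{G}=\{(\sigma,\mu)\in\mathbb{R}^m\times\mathbb{R}^m:\ \sigma_j<\mu_j<\sigma_{j+1}\ (j=1,\dots,m-1),\ \sigma_m<\mu_m<\infty\}$$ (where also $\sigma_1>0$ for elements of the image), and the inverse is given by $$b_j=\frac{\rho_j}{1+\sum_{i=1}^m\rho_i},\qquad d_j=\begin{cases}\Big(\dfrac{4\sigma_j\rho_j}{\kappa(1+\sum_{i=1}^m\rho_i)}\Big)^{1/(n-2)},&n>2,\\[2mm] \dfrac{2\sigma_j\rho_j}{\pi(1+\sum_{i=1}^m\rho_i)},&n=2,\end{cases}$$ where $$\rho_j=\frac{\mu_j-\sigma_j}{\sigma_j}\prod_{i\in\{1,\dots,m\},\,i\ne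 j}\frac{\mu_i-\sigma_j}{\sigma_i-\sigma_j}.$$
   Context: For $n>2$, $\kappa$ is the capacity of the disc $T=\{x\in\mathbb{R}^n:|x|<1,\ x_n=0\}$: $\kappa=\inf\int_{\mathbb{R}^n}|\nabla w|^2dx$ over smooth compactly supported $w$ with $w=1$ on $T$. When $0<\sigma_1<\dots<\sigma_m$ and $b_j>0$, $\sum b_j<1$, the displayed equation in $\lambda$ has exactly $m$ roots, all real, interlacing as $\sigma_j<\mu_j<\sigma_{j+1}$, $\sigma_m<\mu_m$. *)

theory Defs
  imports "HOL-Analysis.Analysis"
begin

definition partial_deriv :: "'n::finite \<Rightarrow> (real^'n \<Rightarrow> real) \<Rightarrow> real^'n \<Rightarrow> real" where
  "partial_deriv i f x = deriv (\<lambda>t. f (x + t *\<^sub>R axis i 1)) 0"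

fun iter_partial :: "'n::finite list \<Rightarrow> (real^'n \<Rightarrow> real) \<Rightarrow> real^'n \<Rightarrow> real" where
  "iter_partial [] f = f"
| "iter_partial (i # is) f = partial_deriv i (iter_partial is f)"

definition smooth_fun :: "(real^'n::finite \<Rightarrow> real) \<Rightarrow> bool" where
  "smooth_fun f \<longleftrightarrow> (\<forall>is. continuous_on UNIV (iter_partial is f) \<and>
      (\<forall>i x. (\<lambda>t. iter_partial is f (x + t *\<^sub>R axis i 1)) differentiable (at 0)))"

definition compact_support :: "(real^'n::finite \<Rightarrow> real) \<Rightarrow> bool" where
  "compact_support f \<longleftrightarrow> compact (closure {x. f x \<noteq> 0})"

text \<open>The disc T = {x : |x| < 1, x_n = 0}; the distinguished last coordinate is
  represented by a fixed (arbitrary) index of the finite index type.\<close>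
definition flat_disc :: "'n::finite itself \<Rightarrow> (real^'n) set" where
  "flat_disc _ = {x :: real^'n. norm x < 1 \<and> x $ (undefined :: 'n) = 0}"

definition disc_capacity :: "'n::finite itself \<Rightarrow> real" where
  "disc_capacity T = Inf {integral UNIV (\<lambda>x. \<Sum>i\<in>UNIV. (partial_deriv i w x)^2) | w :: real^'n \<Rightarrow> real.
       smooth_fun w \<and> compact_support w \<and> (\<forall>x \<in> flat_disc T. w x = 1)}"

section \<open>The map L (vectors in R^m as lists of length m, 0-based indices)\<close>

definition sigma_val :: "nat \<Rightarrow> real \<Rightarrow> real \<Rightarrow> real \<Rightarrow> real" where
  "sigma_val n \<kappa> d b = (if n > 2 then \<kappa> * d ^ (n - 2) / (4 * b) else pi * d / (2 * b))"

definition sigma_list :: "nat \<Rightarrow> real \<Rightarrow> real list \<Rightarrow> real list \<Rightarrow> real list" where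
  "sigma_list n \<kappa> ds bs = map2 (sigma_val n \<kappa>) ds bs"

definition secular :: "real list \<Rightarrow> real list \<Rightarrow> real \<Rightarrow> real" where
  "secular \<sigma> bs lam = 1 + (\<Sum>j<length \<sigma>. \<sigma> ! j * bs ! j / ((1 - sum_list bs) * (\<sigma> ! j - lam)))"

definition mu_list :: "real list \<Rightarrow> real list \<Rightarrow> real list" where
  "mu_list \<sigma> bs = sorted_list_of_set {lam. lam \<notin> set \<sigma> \<and> secular \<sigma> bs lam = 0}"

definition Lmap :: "nat \<Rightarrow> real \<Rightarrow> real list \<times> real list \<Rightarrow> real list \<times> real list" where
  "Lmap n \<kappa> p = (let \<sigma> = sigma_list n \<kappa> (fst p) (snd p) in (\<sigma>, mu_list \<sigma> (snd p)))"

definition domL :: "nat \<Rightarrow> real \<Rightarrow> nat \<Rightarrow> (real list \<times> real list) set" where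
  "domL n \<kappa> m = {(ds, bs). length ds = m \<and> length bs = m \<and>
      (\<forall>j<m. 0 < ds ! j \<and> 0 < bs ! j) \<and> sum_list bs < 1 \<and>
      sorted_wrt (<) (sigma_list n \<kappa> ds bs)}"

definition Gset :: "nat \<Rightarrow> (real list \<times> real list) set" where
  "Gset m = {(\<sigma>, \<mu>). length \<sigma> = m \<and> length \<mu> = m \<and>
      (\<forall>j. j + 1 < m \<longrightarrow> \<sigma> ! j < \<mu> ! j \<and> \<mu> ! j < \<sigma> ! (j + 1)) \<and>
      (0 < m \<longrightarrow> \<sigma> ! (m - 1) < \<mu> ! (m - 1) \<and> 0 < \<sigma> ! 0)}"

definition rho :: "real list \<Rightarrow> real list \<Rightarrow> nat \<Rightarrow> real" where
  "rho \<sigma> \<mu> j = (\<mu> ! j - \<sigma> ! j) / \<sigma> ! j *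
      (\<Prod>i\<in>{0..<length \<sigma>} - {j}. (\<mu> ! i - \<sigma> ! j) / (\<sigma> ! i - \<sigma> ! j))"

definition Linv :: "nat \<Rightarrow> real \<Rightarrow> real list \<times> real list \<Rightarrow> real list \<times> real list" where
  "Linv n \<kappa> p = (let \<sigma> = fst p; \<mu> = snd p; m = length \<sigma>;
      S = 1 + (\<Sum>i<m. rho \<sigma> \<mu> i) in
     (map (\<lambda>j. if n > 2 then (4 * \<sigma> ! j * rho \<sigma> \<mu> j / (\<kappa> * S)) powr (1 / real (n - 2))
               else 2 * \<sigma> ! j * rho \<sigma> \<mu> j / (pi * S)) [0..<m],
      map (\<lambda>j. rho \<sigma> \<mu> j / S) [0..<m]))"

end

theory Submission
  imports Defs "HOL-Computational_Algebra.Polynomial"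
begin

text \<open>Put \<open>c\<^sub>j = b\<^sub>j / (1 - \<Sum>b\<^sub>i)\<close>. Clearing denominators turns the secular equation into
  a polynomial of degree \<open>m\<close> with leading coefficient \<open>(-1)\<^sup>m\<close> whose value at \<open>\<sigma>\<^sub>k\<close> is
  \<open>\<sigma>\<^sub>k c\<^sub>k \<Prod>\<^sub>i\<^sub>\<noteq>\<^sub>k (\<sigma>\<^sub>i - \<sigma>\<^sub>k)\<close>. These values alternate in sign, so there is a root in every gap
  \<open>(\<sigma>\<^sub>k, \<sigma>\<^sub>k\<^sub>+\<^sub>1)\<close> and one beyond \<open>\<sigma>\<^sub>m\<close>; hence the polynomial is \<open>\<Prod>(\<mu>\<^sub>i - \<lambda>)\<close>, and
  evaluating this product at \<open>\<sigma>\<^sub>k\<close> recovers \<open>c\<^sub>k = \<rho>\<^sub>k\<close>. Normalising the \<open>c\<^sub>j\<close> gives back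
  the \<open>b\<^sub>j\<close>, and \<open>\<sigma>\<^sub>j\<close>, \<open>b\<^sub>j\<close> determine \<open>d\<^sub>j\<close>.

  For \<open>n > 2\<close> this needs \<open>\<kappa> > 0\<close>. An admissible \<open>w\<close> equals \<open>1\<close> on the disc, so by the
  fundamental theorem of calculus along the normal direction, \<open>|w|\<close> and \<open>|\<nabla>w|\<close> cannot both be
  small near the disc; the Hardy inequality \<open>\<integral> w\<^sup>2 / (1 + |x|\<^sup>2) \<le> 4 \<integral> |\<nabla>w|\<^sup>2\<close> (valid for
  \<open>n \<ge> 3\<close>) then bounds the energy of \<open>w\<close> from below by a positive constant.\<close>

section \<open>The secular polynomial and its interlacing roots\<close>

definition nodes_poly :: "(nat \<Rightarrow> real) \<Rightarrow> nat set \<Rightarrow> real poly" where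
  "nodes_poly s A = (\<Prod>i\<in>A. [:s i, -1:])"

definition secular_poly :: "(nat \<Rightarrow> real) \<Rightarrow> (nat \<Rightarrow> real) \<Rightarrow> nat \<Rightarrow> real poly" where
  "secular_poly s c m =
     nodes_poly s {..<m} + (\<Sum>j<m. smult (s j * c j) (nodes_poly s ({..<m} - {j})))"

definition interlacing :: "nat \<Rightarrow> (nat \<Rightarrow> real) \<Rightarrow> (nat \<Rightarrow> real) \<Rightarrow> bool" where
  "interlacing m s \<mu> \<longleftrightarrow> (\<forall>k<m. s k < \<mu> k) \<and> (\<forall>k. k + 1 < m \<longrightarrow> \<mu> k < s (k + 1))"

lemma poly_nodes_poly [simp]: "poly (nodes_poly s A) x = (\<Prod>i\<in>A. s i - x)"
  by (simp add: nodes_poly_def poly_prod)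

lemma degree_nodes_poly: "finite A \<Longrightarrow> degree (nodes_poly s A) = card A"
  unfolding nodes_poly_def by (subst degree_prod_sum_eq) auto

lemma coeff_nodes_poly_card: "finite A \<Longrightarrow> coeff (nodes_poly s A) (card A) = (-1) ^ card A"
  using lead_coeff_prod[of "\<lambda>i. [:s i, -1:]" A] degree_nodes_poly[of A s]
  by (simp add: nodes_poly_def)

lemma degree_secular_poly_le: "degree (secular_poly s c m) \<le> m"
  unfolding secular_poly_def
  by (intro degree_add_le degree_sum_le)
     (auto intro: order.trans[OF degree_smult_le] simp: degree_nodes_poly)

lemma coeff_secular_poly: "coeff (secular_poly s c m) m = (-1) ^ m"
proof -
  have "coeff (nodes_poly s ({..<m} - {j})) m = 0" if "j < m" for j
    using that by (intro coeff_eq_0) (simp add: degree_nodes_poly)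
  then show ?thesis
    using coeff_nodes_poly_card[of "{..<m}" s] by (simp add: secular_poly_def coeff_sum)
qed

lemma poly_secular_poly:
  "poly (secular_poly s c m) x =
     (\<Prod>i<m. s i - x) + (\<Sum>j<m. s j * c j * (\<Prod>i\<in>{..<m}-{j}. s i - x))"
  by (simp add: secular_poly_def poly_sum)

lemma poly_secular_poly_node:
  assumes "k < m" "inj_on s {..<m}"
  shows "poly (secular_poly s c m) (s k) = s k * c k * (\<Prod>i\<in>{..<m}-{k}. s i - s k)"
proof -
  have "(\<Prod>i\<in>{..<m}-{j}. s i - s k) = 0" if "j \<in> {..<m} - {k}" for j
    using that assms(1) by (intro prod_zero) auto
  then have "(\<Sum>j<m. s j * c j * (\<Prod>i\<in>{..<m}-{j}. s i - s k))
      = s k * c k * (\<Prod>i\<in>{..<m}-{k}. s i - s k)"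
    using assms(1) by (subst sum.remove[of _ k]) (auto intro!: sum.neutral)
  moreover have "(\<Prod>i<m. s i - s k) = 0"
    using assms(1) by (intro prod_zero) auto
  ultimately show ?thesis by (simp add: poly_secular_poly)
qed

lemma poly_secular_poly_off_nodes:
  assumes "x \<notin> s ` {..<m}"
  shows "poly (secular_poly s c m) x = (\<Prod>i<m. s i - x) * (1 + (\<Sum>j<m. s j * c j / (s j - x)))"
proof -
  have "(\<Prod>i\<in>{..<m}-{j}. s i - x) = (\<Prod>i<m. s i - x) / (s j - x)" if "j < m" for j
    using that assms by (subst prod.remove[of _ j]) auto
  then have "(\<Sum>j<m. s j * c j * (\<Prod>i\<in>{..<m}-{j}. s i - x))
      = (\<Sum>j<m. (\<Prod>i<m. s i - x) * (s j * c j / (s j - x)))"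
    by (intro sum.cong) auto
  then show ?thesis by (simp add: poly_secular_poly sum_distrib_left algebra_simps)
qed

lemma secular_poly_eqI:
  assumes "inj_on x {..<m}"
    and "\<And>k. k < m \<Longrightarrow> poly (secular_poly s c m) (x k) = (\<Prod>i<m. t i - x k)"
  shows "secular_poly s c m = nodes_poly t {..<m}"
proof (rule poly_eqI_degree_lead_coeff[where n = m and A = "x ` {..<m}"])
  show "coeff (secular_poly s c m) m = coeff (nodes_poly t {..<m}) m"
    using coeff_secular_poly coeff_nodes_poly_card[of "{..<m}" t] by simp
  show "m \<le> card (x ` {..<m})" using card_image[OF assms(1)] by simp
  show "degree (nodes_poly t {..<m}) \<le> m" by (simp add: degree_nodes_poly)
qed (use assms(2) degree_secular_poly_le in auto)

lemma inj_on_if_increasing: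
  fixes s :: "nat \<Rightarrow> real"
  assumes "\<And>i j. i < j \<Longrightarrow> j < m \<Longrightarrow> s i < s j"
  shows "inj_on s {..<m}"
proof (rule inj_onI)
  fix x y assume "x \<in> {..<m}" "y \<in> {..<m}" "s x = s y"
  then show "x = y" by (cases rule: linorder_cases[of x y]) (auto dest: assms)
qed

lemma increasing_if_Suc_increasing:
  fixes s :: "nat \<Rightarrow> real"
  assumes "\<And>k. k + 1 < m \<Longrightarrow> s k < s (k + 1)" "i < j" "j < m"
  shows "s i < s j"
  using assms(2,3)
proof (induction j)
  case (Suc j)
  then show ?case
    using assms(1)[of j] by (cases "i = j") auto
qed simp

lemma sign_prod_node_gaps:
  assumes smono: "\<And>i j. i < j \<Longrightarrow> j < m \<Longrightarrow> s i < (s j::real)" and k: "k < m"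
  shows "0 < (-1) ^ k * (\<Prod>i\<in>{..<m}-{k}. s i - s k)"
proof -
  have "({..<m} - {k}) \<inter> {i. i < k} = {..<k}" using k by auto
  then have "(\<Prod>i\<in>{..<m}-{k}. (if i < k then -1 else 1::real)) = (-1) ^ k"
    by (simp add: prod.If_cases)
  then have "(-1) ^ k * (\<Prod>i\<in>{..<m}-{k}. s i - s k)
      = (\<Prod>i\<in>{..<m}-{k}. (if i < k then -1 else 1) * (s i - s k))"
    by (simp add: prod.distrib)
  also have "\<dots> > 0"
    using smono k by (intro prod_pos) (auto simp: nat_neq_iff)
  finally show ?thesis .
qed

lemma sign_secular_poly_node:
  assumes smono: "\<And>i j. i < j \<Longrightarrow> j < m \<Longrightarrow> s i < (s j::real)"
    and "k < m" "0 < s k" "0 < c k"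
  shows "0 < (-1) ^ k * poly (secular_poly s c m) (s k)"
proof -
  have "(-1) ^ k * poly (secular_poly s c m) (s k)
      = s k * c k * ((-1) ^ k * (\<Prod>i\<in>{..<m}-{k}. s i - s k))"
    using poly_secular_poly_node[OF \<open>k < m\<close> inj_on_if_increasing[where s=s and m=m, OF smono]] by simp
  also have "\<dots> > 0"
    using sign_prod_node_gaps[where s=s and m=m, OF smono \<open>k < m\<close>] assms(3,4) by simp
  finally show ?thesis .
qed

lemma sign_secular_poly_beyond_nodes:
  assumes smono: "\<And>i j. i < j \<Longrightarrow> j < m \<Longrightarrow> s i < (s j::real)" and "0 < m"
    and pos: "\<And>j. j < m \<Longrightarrow> 0 < s j \<and> 0 < c j"
    and L: "s (m - 1) + 1 + (\<Sum>j<m. s j * c j) \<le> L"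
  shows "0 < (-1) ^ m * poly (secular_poly s c m) L"
proof -
  define T where "T = (\<Sum>j<m. s j * c j)"
  have T: "0 \<le> T" unfolding T_def using pos by (intro sum_nonneg) (simp add: less_imp_le)
  have "s j \<le> s (m - 1)" if "j < m" for j
    using smono[of j "m - 1"] that by (cases "j = m - 1") (auto simp: less_imp_le)
  then have gap: "1 + T \<le> L - s j" if "j < m" for j
    using that L unfolding T_def by force
  have "(\<Prod>i<m. L - s i) = (\<Prod>i<m. (-1) * (s i - L))" by simp
  also have "\<dots> = (\<Prod>i<m. (-1::real)) * (\<Prod>i<m. s i - L)" by (rule prod.distrib)
  finally have sign: "(-1) ^ m * (\<Prod>i<m. s i - L) = (\<Prod>i<m. L - s i)" by simp
  have "s j * c j / (L - s j) \<le> s j * c j / (1 + T)" if "j < m" for j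
    using gap[OF that] pos[OF that] T
    by (intro divide_left_mono) (auto intro: mult_pos_pos simp: zero_le_mult_iff)
  then have "(\<Sum>j<m. s j * c j / (L - s j)) \<le> (\<Sum>j<m. s j * c j / (1 + T))"
    by (intro sum_mono) auto
  also have "\<dots> < 1" using T by (simp add: T_def sum_divide_distrib[symmetric])
  finally have "(\<Sum>j<m. s j * c j / (L - s j)) < 1" .
  moreover have "(\<Sum>j<m. s j * c j / (s j - L)) = - (\<Sum>j<m. s j * c j / (L - s j))"
    by (simp add: sum_negf[symmetric] minus_divide_right)
  ultimately have "0 < 1 + (\<Sum>j<m. s j * c j / (s j - L))" by simp
  moreover have "0 < (\<Prod>i<m. L - s i)"
    using gap T by (intro prod_pos) (smt (verit) lessThan_iff)
  moreover have "L \<notin> s ` {..<m}" using gap T by force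
  ultimately show ?thesis
    using poly_secular_poly_off_nodes[of L s m c] sign by (simp add: mult.assoc[symmetric])
qed

lemma interlacing_increasing:
  assumes smono: "\<And>i j. i < j \<Longrightarrow> j < m \<Longrightarrow> s i < s j"
    and "interlacing m s \<mu>" "i < j" "j < m"
  shows "\<mu> i < \<mu> j"
proof -
  have "\<mu> i < s (i + 1)" using assms(2-4) by (auto simp: interlacing_def)
  also have "s (i + 1) \<le> s j" using smono[of "i + 1" j] assms(3,4) by (cases "i + 1 = j") auto
  also have "s j < \<mu> j" using assms(2,4) by (auto simp: interlacing_def)
  finally show ?thesis .
qed

lemma interlacing_not_node:
  assumes smono: "\<And>i j. i < j \<Longrightarrow> j < m \<Longrightarrow> s i < s j"
    and "interlacing m s \<mu>" "k < m"
  shows "\<mu> k \<notin> s ` {..<m}"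
proof
  assume "\<mu> k \<in> s ` {..<m}"
  then obtain j where j: "j < m" "\<mu> k = s j" by auto
  show False
  proof (cases "j \<le> k")
    case True
    then have "s j \<le> s k" using smono[of j k] \<open>k < m\<close> by (cases "j = k") auto
    then show False using assms(2,3) j by (auto simp: interlacing_def)
  next
    case False
    then have "k + 1 < m" "s (k + 1) \<le> s j"
      using smono[of "k + 1" j] j by (cases "k + 1 = j"; simp)+
    then show False using assms(2) j by (auto simp: interlacing_def)
  qed
qed

text \<open>Intermediate value theorem: by \<open>sign_secular_poly_node\<close> the sign of the secular
  polynomial alternates along the nodes, and it changes once more beyond the last node.\<close>
lemma secular_poly_root_after_node:
  assumes smono: "\<And>i j. i < j \<Longrightarrow> j < m \<Longrightarrow> s i < (s j::real)"
    and pos: "\<And>j. j < m \<Longrightarrow> 0 < s j \<and> 0 < c j" and k: "k < m"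
  obtains x where "s k < x" "k + 1 < m \<Longrightarrow> x < s (k + 1)" "poly (secular_poly s c m) x = 0"
proof -
  define L where "L = s (m - 1) + 1 + (\<Sum>j<m. s j * c j)"
  define hi where "hi = (if k + 1 < m then s (k + 1) else L)"
  define g where "g = (\<lambda>x. (-1) ^ k * poly (secular_poly s c m) x)"
  have "0 < g (s k)"
    unfolding g_def using sign_secular_poly_node[where s=s and m=m, OF smono k] pos[OF k] by blast
  moreover have "g hi < 0"
  proof (cases "k + 1 < m")
    case True
    then show ?thesis
      using sign_secular_poly_node[where s=s and m=m, OF smono True] pos[OF True] by (simp add: g_def hi_def)
  next
    case False
    then have "m = k + 1" using k by simp
    then show ?thesis
      using sign_secular_poly_beyond_nodes[where s=s and m=m, OF smono _ pos, of L]
      by (simp add: g_def hi_def L_def)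
  qed
  moreover have "s k < hi"
  proof (cases "k + 1 < m")
    case False
    have "0 \<le> (\<Sum>j<m. s j * c j)" using pos by (intro sum_nonneg) (simp add: less_imp_le)
    moreover have "m - 1 = k" using False k by simp
    ultimately show ?thesis using False by (simp add: hi_def L_def)
  qed (use smono[of k "k + 1"] in \<open>simp add: hi_def\<close>)
  moreover have "continuous_on {s k..hi} g" unfolding g_def by (intro continuous_intros)
  ultimately obtain x where "s k \<le> x" "x \<le> hi" "g x = 0"
    using IVT2'[of g hi 0 "s k"] by auto
  moreover have "x \<noteq> s k" "x \<noteq> hi" using \<open>g x = 0\<close> \<open>0 < g (s k)\<close> \<open>g hi < 0\<close> by auto
  ultimately show ?thesis
    using that[of x] unfolding hi_def g_def by (auto split: if_splits)
qed

theorem secular_poly_interlacing_roots: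
  assumes smono: "\<And>i j. i < j \<Longrightarrow> j < m \<Longrightarrow> s i < (s j::real)"
    and pos: "\<And>j. j < m \<Longrightarrow> 0 < s j \<and> 0 < c j"
  obtains \<mu> where "interlacing m s \<mu>" "secular_poly s c m = nodes_poly \<mu> {..<m}"
proof -
  have "\<exists>x. s k < x \<and> (k + 1 < m \<longrightarrow> x < s (k + 1)) \<and> poly (secular_poly s c m) x = 0"
    if "k < m" for k
    using secular_poly_root_after_node[where s=s and m=m, OF smono pos that] by blast
  then obtain \<mu> where \<mu>: "\<And>k. k < m \<Longrightarrow> s k < \<mu> k \<and> (k + 1 < m \<longrightarrow> \<mu> k < s (k + 1))
      \<and> poly (secular_poly s c m) (\<mu> k) = 0"
    by metis
  then have il: "interlacing m s \<mu>" by (auto simp: interlacing_def)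
  have "secular_poly s c m = nodes_poly \<mu> {..<m}"
  proof (rule secular_poly_eqI)
    show "inj_on \<mu> {..<m}"
      by (rule inj_on_if_increasing[OF interlacing_increasing[where s=s and m=m, OF smono il]])
    show "poly (secular_poly s c m) (\<mu> k) = (\<Prod>i<m. \<mu> i - \<mu> k)" if "k < m" for k
      using \<mu>[OF that] that by (auto intro: prod_zero)
  qed
  with il that show ?thesis by blast
qed

section \<open>Recovering the weights from the roots\<close>

definition rho_fun :: "(nat \<Rightarrow> real) \<Rightarrow> (nat \<Rightarrow> real) \<Rightarrow> nat \<Rightarrow> nat \<Rightarrow> real" where
  "rho_fun s \<mu> m k = (\<mu> k - s k) / s k * (\<Prod>i\<in>{..<m}-{k}. (\<mu> i - s k) / (s i - s k))"

lemma rho_fun_eq_quotient: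
  assumes "k < m"
  shows "rho_fun s \<mu> m k = (\<Prod>i<m. \<mu> i - s k) / (s k * (\<Prod>i\<in>{..<m}-{k}. s i - s k))"
  using assms by (simp add: rho_fun_def prod_dividef prod.remove[of "{..<m}" k])

lemma prod_node_gaps_nonzero:
  fixes s :: "nat \<Rightarrow> real"
  assumes "inj_on s {..<m}" "k < m"
  shows "(\<Prod>i\<in>{..<m}-{k}. s i - s k) \<noteq> 0"
  using assms by (auto simp: inj_on_def)

lemma secular_poly_coeff_eq_rho_fun:
  assumes "secular_poly s c m = nodes_poly \<mu> {..<m}" "inj_on s {..<m}" "k < m" "s k \<noteq> 0"
  shows "c k = rho_fun s \<mu> m k"
proof -
  have "s k * c k * (\<Prod>i\<in>{..<m}-{k}. s i - s k) = (\<Prod>i<m. \<mu> i - s k)"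
    using poly_secular_poly_node[OF assms(3,2), of c] assms(1) by simp
  then show ?thesis
    using rho_fun_eq_quotient[OF assms(3)] prod_node_gaps_nonzero[OF assms(2,3)] assms(4)
    by (simp add: field_simps)
qed

lemma secular_poly_rho_fun:
  assumes smono: "\<And>i j. i < j \<Longrightarrow> j < m \<Longrightarrow> s i < (s j::real)"
    and "\<And>k. k < m \<Longrightarrow> 0 < s k" and c: "\<And>k. k < m \<Longrightarrow> c k = rho_fun s \<mu> m k"
  shows "secular_poly s c m = nodes_poly \<mu> {..<m}"
proof (rule secular_poly_eqI[OF inj_on_if_increasing[OF smono]])
  fix k assume k: "k < m"
  have inj: "inj_on s {..<m}" by (rule inj_on_if_increasing[OF smono])
  have "s k \<noteq> 0" using assms(2) k by (simp add: less_imp_neq[symmetric])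
  then show "poly (secular_poly s c m) (s k) = (\<Prod>i<m. \<mu> i - s k)"
    using poly_secular_poly_node[OF k inj, of c] c[OF k] rho_fun_eq_quotient[OF k, of s \<mu>]
      prod_node_gaps_nonzero[OF inj k]
    by (simp add: field_simps)
qed

lemma rho_fun_pos:
  assumes smono: "\<And>i j. i < j \<Longrightarrow> j < m \<Longrightarrow> s i < (s j::real)"
    and il: "interlacing m s \<mu>" and "\<And>k. k < m \<Longrightarrow> 0 < s k" and k: "k < m"
  shows "0 < rho_fun s \<mu> m k"
  unfolding rho_fun_def
proof (intro mult_pos_pos prod_pos)
  show "0 < (\<mu> k - s k) / s k" using il assms(3) k by (auto simp: interlacing_def)
  fix i assume i: "i \<in> {..<m} - {k}"
  show "0 < (\<mu> i - s k) / (s i - s k)"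
  proof (cases "i < k")
    case True
    have "\<mu> i < s (i + 1)" using il True k by (auto simp: interlacing_def)
    also have "s (i + 1) \<le> s k" using smono[of "i + 1" k] True k by (cases "i + 1 = k") auto
    finally show ?thesis using smono[of i k] True k by (simp add: divide_neg_neg)
  next
    case False
    then show ?thesis using smono[of k i] il i by (auto simp: interlacing_def)
  qed
qed

lemma rho_eq_rho_fun:
  assumes "length \<sigma> = m" "length \<mu> = m" "j < m"
  shows "rho \<sigma> \<mu> j = rho_fun (nth \<sigma>) (nth \<mu>) m j"
  using assms by (simp add: rho_def rho_fun_def atLeast0LessThan)

lemma Gset_iff_interlacing:
  assumes "length \<sigma> = m" "length \<mu> = m"
  shows "(\<sigma>, \<mu>) \<in> Gset m \<longleftrightarrow> interlacing m (nth \<sigma>) (nth \<mu>) \<and> (0 < m \<longrightarrow> 0 < \<sigma> ! 0)"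
proof -
  have "(\<forall>k<m. P k) \<longleftrightarrow> (\<forall>k. k + 1 < m \<longrightarrow> P k) \<and> (0 < m \<longrightarrow> P (m - 1))" for P
  proof (intro iffI allI impI)
    fix k assume "(\<forall>k. k + 1 < m \<longrightarrow> P k) \<and> (0 < m \<longrightarrow> P (m - 1))" "k < m"
    moreover have "k + 1 < m \<or> k = m - 1" using \<open>k < m\<close> by linarith
    ultimately show "P k" by auto
  qed auto
  from this[of "\<lambda>k. \<sigma> ! k < \<mu> ! k"] show ?thesis
    using assms by (auto simp: Gset_def interlacing_def)
qed

lemma mu_list_eq:
  assumes len: "length \<sigma> = m" "length bs = m"
    and smono: "\<And>i j. i < j \<Longrightarrow> j < m \<Longrightarrow> \<sigma> ! i < \<sigma> ! j"
    and il: "interlacing m (nth \<sigma>) \<mu>"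
    and F: "secular_poly (nth \<sigma>) (\<lambda>j. bs ! j / (1 - sum_list bs)) m = nodes_poly \<mu> {..<m}"
  shows "mu_list \<sigma> bs = map \<mu> [0..<m]"
proof -
  have set\<sigma>: "set \<sigma> = nth \<sigma> ` {..<m}" using len by (auto simp: set_conv_nth)
  have "secular \<sigma> bs x = 0 \<longleftrightarrow> (\<Prod>i<m. \<mu> i - x) = 0" if "x \<notin> nth \<sigma> ` {..<m}" for x
  proof -
    have "(\<Prod>i<m. \<sigma> ! i - x) \<noteq> 0" using that by (auto simp: prod_zero_iff)
    then show ?thesis
      using poly_secular_poly_off_nodes[OF that, of "\<lambda>j. bs ! j / (1 - sum_list bs)"] F len
      by (simp add: secular_def)
  qed
  then have "{x. x \<notin> set \<sigma> \<and> secular \<sigma> bs x = 0} = \<mu> ` {..<m}"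
    using interlacing_not_node[OF smono il] by (auto simp: set\<sigma> prod_zero_iff)
  also have "\<dots> = set (map \<mu> [0..<m])" by auto
  finally have roots: "{x. x \<notin> set \<sigma> \<and> secular \<sigma> bs x = 0} = set (map \<mu> [0..<m])" .
  have "sorted_wrt (<) (map \<mu> [0..<m])"
    by (auto simp: sorted_wrt_iff_nth_less intro: interlacing_increasing[OF smono il])
  then have "sorted (map \<mu> [0..<m])" "distinct (map \<mu> [0..<m])" by (auto simp: strict_sorted_iff)
  then show ?thesis
    unfolding mu_list_def roots by (metis sorted_list_of_set_sort_remdups distinct_remdups_id sorted_sort_id)
qed

definition radius_of :: "nat \<Rightarrow> real \<Rightarrow> real \<Rightarrow> real \<Rightarrow> real" where
  "radius_of n \<kappa> \<sigma> b =
     (if 2 < n then (4 * \<sigma> * b / \<kappa>) powr (1 / real (n - 2)) else 2 * \<sigma> * b / pi)"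

lemma sigma_val_pos:
  assumes "0 < d" "0 < b" "2 < n \<longrightarrow> 0 < \<kappa>"
  shows "0 < sigma_val n \<kappa> d b"
  using assms by (auto simp: sigma_val_def)

lemma radius_of_pos:
  assumes "0 < \<sigma>" "0 < b" "2 < n \<longrightarrow> 0 < \<kappa>"
  shows "0 < radius_of n \<kappa> \<sigma> b"
  using assms by (auto simp: radius_of_def)

lemma radius_of_sigma_val:
  assumes "0 < d" "0 < b" "2 < n \<longrightarrow> 0 < \<kappa>"
  shows "radius_of n \<kappa> (sigma_val n \<kappa> d b) b = d"
  using assms by (auto simp: radius_of_def sigma_val_def powr_realpow[symmetric] powr_powr)

lemma sigma_val_radius_of:
  assumes "0 < \<sigma>" "0 < b" "2 < n \<longrightarrow> 0 < \<kappa>"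
  shows "sigma_val n \<kappa> (radius_of n \<kappa> \<sigma> b) b = \<sigma>"
  using assms by (auto simp: radius_of_def sigma_val_def powr_realpow[symmetric] powr_powr)

lemma Linv_eq:
  assumes "length \<sigma> = m" "\<And>j. j < m \<Longrightarrow> rho \<sigma> \<mu> j = r j"
  defines "S \<equiv> 1 + (\<Sum>i<m. r i)"
  shows "Linv n \<kappa> (\<sigma>, \<mu>) =
    (map (\<lambda>j. radius_of n \<kappa> (\<sigma> ! j) (r j / S)) [0..<m], map (\<lambda>j. r j / S) [0..<m])"
proof -
  have "1 + (\<Sum>i<m. rho \<sigma> \<mu> i) = S" using assms(2) by (simp add: S_def)
  then show ?thesis
    unfolding Linv_def Let_def fst_conv snd_conv assms(1)
    by (simp add: radius_of_def assms(2) mult.commute cong: map_cong)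
qed

lemma normalize_weights:
  fixes b :: "nat \<Rightarrow> real"
  assumes "(\<Sum>i<m. b i) < 1"
  shows "(b j / (1 - (\<Sum>i<m. b i))) / (1 + (\<Sum>i<m. b i / (1 - (\<Sum>i<m. b i)))) = b j"
  using assms by (simp add: sum_divide_distrib[symmetric] field_simps)

lemma unnormalize_weights:
  fixes r :: "nat \<Rightarrow> real"
  assumes "0 \<le> (\<Sum>i<m. r i)"
  defines "S \<equiv> 1 + (\<Sum>i<m. r i)"
  shows "(\<Sum>i<m. r i / S) < 1" "(r j / S) / (1 - (\<Sum>i<m. r i / S)) = r j"
  using assms by (simp_all add: sum_divide_distrib[symmetric] field_simps)

lemma domL_sigma_list:
  assumes "2 < n \<longrightarrow> 0 < \<kappa>" "(ds, bs) \<in> domL n \<kappa> m"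
  defines "\<sigma> \<equiv> sigma_list n \<kappa> ds bs"
  shows "length \<sigma> = m" "\<And>j. j < m \<Longrightarrow> \<sigma> ! j = sigma_val n \<kappa> (ds ! j) (bs ! j)"
    "\<And>j. j < m \<Longrightarrow> 0 < \<sigma> ! j" "\<And>i j. i < j \<Longrightarrow> j < m \<Longrightarrow> \<sigma> ! i < \<sigma> ! j"
proof -
  have len: "length ds = m" "length bs = m" and pos: "\<And>j. j < m \<Longrightarrow> 0 < ds ! j \<and> 0 < bs ! j"
    and sorted: "sorted_wrt (<) \<sigma>"
    using assms(2) by (auto simp: domL_def \<sigma>_def)
  show "length \<sigma> = m" and nth: "\<And>j. j < m \<Longrightarrow> \<sigma> ! j = sigma_val n \<kappa> (ds ! j) (bs ! j)"
    using len by (simp_all add: \<sigma>_def sigma_list_def)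
  show "\<And>j. j < m \<Longrightarrow> 0 < \<sigma> ! j"
    using nth pos sigma_val_pos[OF _ _ assms(1)] by simp
  show "\<And>i j. i < j \<Longrightarrow> j < m \<Longrightarrow> \<sigma> ! i < \<sigma> ! j"
    using sorted len by (simp add: sorted_wrt_iff_nth_less \<sigma>_def sigma_list_def)
qed

lemma Linv_Lmap:
  assumes kpos: "2 < n \<longrightarrow> 0 < \<kappa>" and x: "x \<in> domL n \<kappa> m"
  shows "Lmap n \<kappa> x \<in> Gset m \<and> Linv n \<kappa> (Lmap n \<kappa> x) = x"
proof -
  obtain ds bs where x_eq: "x = (ds, bs)" by force
  with x have ld: "length ds = m" and lb: "length bs = m"
    and pos: "\<And>j. j < m \<Longrightarrow> 0 < ds ! j \<and> 0 < bs ! j" and B: "sum_list bs < 1"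
    by (auto simp: domL_def)
  define \<sigma> where "\<sigma> = sigma_list n \<kappa> ds bs"
  note \<sigma> = domL_sigma_list[OF kpos x[unfolded x_eq], folded \<sigma>_def]
  define c where "c = (\<lambda>j. bs ! j / (1 - sum_list bs))"
  have "0 < c j" if "j < m" for j using pos[OF that] B by (simp add: c_def)
  then obtain \<mu> where il: "interlacing m (nth \<sigma>) \<mu>"
    and F: "secular_poly (nth \<sigma>) c m = nodes_poly \<mu> {..<m}"
    using secular_poly_interlacing_roots[of m "nth \<sigma>" c] \<sigma>(3,4) by blast
  have L: "Lmap n \<kappa> x = (\<sigma>, map \<mu> [0..<m])"
    using mu_list_eq[OF \<sigma>(1) lb \<sigma>(4) il F[unfolded c_def]] by (simp add: Lmap_def x_eq \<sigma>_def)
  have "Lmap n \<kappa> x \<in> Gset m"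
    unfolding L using Gset_iff_interlacing[of \<sigma> m "map \<mu> [0..<m]"] \<sigma>(1,3) il
    by (auto simp: interlacing_def)
  have rho: "rho \<sigma> (map \<mu> [0..<m]) j = c j" if "j < m" for j
  proof -
    have "rho \<sigma> (map \<mu> [0..<m]) j = rho_fun (nth \<sigma>) \<mu> m j"
      using rho_eq_rho_fun[OF \<sigma>(1) _ that, of "map \<mu> [0..<m]"] that by (simp add: rho_fun_def)
    also have "\<dots> = c j"
      using secular_poly_coeff_eq_rho_fun[OF F inj_on_if_increasing[of m "nth \<sigma>", OF \<sigma>(4)] that]
        \<sigma>(3)[OF that] by simp
    finally show ?thesis .
  qed
  have sum_bs: "sum_list bs = (\<Sum>i<m. bs ! i)"
    using lb by (simp add: sum_list_sum_nth atLeast0LessThan)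
  have "c j / (1 + (\<Sum>i<m. c i)) = bs ! j" for j
    using normalize_weights[of "nth bs" m j] B unfolding c_def sum_bs by simp
  then have "Linv n \<kappa> (Lmap n \<kappa> x)
      = (map (\<lambda>j. radius_of n \<kappa> (\<sigma> ! j) (bs ! j)) [0..<m], map (nth bs) [0..<m])"
    using Linv_eq[OF \<sigma>(1) rho] by (simp add: L)
  also have "\<dots> = x"
    using ld lb \<sigma>(2) pos radius_of_sigma_val[OF _ _ kpos] by (auto simp: x_eq intro!: nth_equalityI)
  finally show ?thesis using \<open>Lmap n \<kappa> x \<in> Gset m\<close> by simp
qed

lemma Gset_nodes:
  assumes "(\<sigma>, \<mu>) \<in> Gset m"
  shows "\<And>i j. i < j \<Longrightarrow> j < m \<Longrightarrow> \<sigma> ! i < \<sigma> ! j" "\<And>j. j < m \<Longrightarrow> 0 < \<sigma> ! j"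
proof -
  have len: "length \<sigma> = m" "length \<mu> = m" using assms by (auto simp: Gset_def)
  with assms have il: "interlacing m (nth \<sigma>) (nth \<mu>)" and \<sigma>0: "0 < m \<longrightarrow> 0 < \<sigma> ! 0"
    using Gset_iff_interlacing by blast+
  show smono: "\<sigma> ! i < \<sigma> ! j" if "i < j" "j < m" for i j
    using increasing_if_Suc_increasing[of m "nth \<sigma>", OF _ that] il
    by (meson add_lessD1 interlacing_def order.strict_trans)
  show "0 < \<sigma> ! j" if "j < m" for j
    using \<sigma>0 smono[of 0 j] that by (cases "j = 0") auto
qed

lemma Lmap_Linv:
  assumes kpos: "2 < n \<longrightarrow> 0 < \<kappa>" and p: "p \<in> Gset m"
  shows "Linv n \<kappa> p \<in> domL n \<kappa> m \<and> Lmap n \<kappa> (Linv n \<kappa> p) = p"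
proof -
  obtain \<sigma> \<mu> where p_eq: "p = (\<sigma>, \<mu>)" by force
  with p have l\<sigma>: "length \<sigma> = m" and l\<mu>: "length \<mu> = m" by (auto simp: Gset_def)
  with p p_eq have il: "interlacing m (nth \<sigma>) (nth \<mu>)"
    using Gset_iff_interlacing by blast
  note smono = Gset_nodes(1)[OF p[unfolded p_eq]] and pos = Gset_nodes(2)[OF p[unfolded p_eq]]
  define r where "r = rho_fun (nth \<sigma>) (nth \<mu>) m"
  have r: "rho \<sigma> \<mu> j = r j" if "j < m" for j
    using rho_eq_rho_fun[OF l\<sigma> l\<mu> that] by (simp add: r_def)
  have rpos: "0 < r j" if "j < m" for j
    unfolding r_def using rho_fun_pos[of m "nth \<sigma>", OF smono il pos that] by simp
  define S where "S = 1 + (\<Sum>i<m. r i)"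
  define bs where "bs = map (\<lambda>j. r j / S) [0..<m]"
  define ds where "ds = map (\<lambda>j. radius_of n \<kappa> (\<sigma> ! j) (r j / S)) [0..<m]"
  have Linv: "Linv n \<kappa> p = (ds, bs)"
    using Linv_eq[OF l\<sigma> r] by (simp add: p_eq ds_def bs_def S_def)
  have "0 \<le> (\<Sum>i<m. r i)" using rpos by (intro sum_nonneg) (simp add: less_imp_le)
  note weights = unnormalize_weights[OF this, folded S_def]
  have S: "0 < S" using \<open>0 \<le> (\<Sum>i<m. r i)\<close> by (simp add: S_def)
  have sum_bs: "sum_list bs = (\<Sum>i<m. r i / S)"
    by (simp add: bs_def sum_list_sum_nth atLeast0LessThan)
  have \<sigma>_eq: "sigma_list n \<kappa> ds bs = \<sigma>"
    using l\<sigma> pos rpos S sigma_val_radius_of[OF _ _ kpos]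
    by (auto simp: sigma_list_def ds_def bs_def intro!: nth_equalityI)
  have "(ds, bs) \<in> domL n \<kappa> m"
  proof -
    have "sum_list bs < 1" using weights(1) sum_bs by simp
    moreover have "0 < ds ! j \<and> 0 < bs ! j" if "j < m" for j
      using pos[OF that] rpos[OF that] S radius_of_pos[OF _ _ kpos] that by (simp add: ds_def bs_def)
    ultimately show ?thesis
      using \<sigma>_eq smono l\<sigma> by (simp add: domL_def ds_def bs_def sorted_wrt_iff_nth_less)
  qed
  moreover have "secular_poly (nth \<sigma>) (\<lambda>j. bs ! j / (1 - sum_list bs)) m = nodes_poly (nth \<mu>) {..<m}"
  proof (rule secular_poly_rho_fun[of m "nth \<sigma>", OF smono pos])
    fix k assume "k < m"
    then show "bs ! k / (1 - sum_list bs) = rho_fun (nth \<sigma>) (nth \<mu>) m k"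
      using weights(2)[of k] unfolding sum_bs by (simp add: bs_def r_def)
  qed
  from mu_list_eq[OF l\<sigma> _ smono il this] have "mu_list \<sigma> bs = map (nth \<mu>) [0..<m]"
    by (simp add: bs_def)
  then have "mu_list \<sigma> bs = \<mu>" using l\<mu> map_nth by metis
  ultimately show ?thesis using \<sigma>_eq Linv by (simp add: Lmap_def p_eq)
qed

lemma bij_betw_Lmap:
  assumes "2 < n \<longrightarrow> 0 < \<kappa>"
  shows "bij_betw (Lmap n \<kappa>) (domL n \<kappa> m) (Gset m)"
    and "p \<in> Gset m \<Longrightarrow> inv_into (domL n \<kappa> m) (Lmap n \<kappa>) p = Linv n \<kappa> p"
proof -
  note left = Linv_Lmap[OF assms] and right = Lmap_Linv[OF assms]
  show bij: "bij_betw (Lmap n \<kappa>) (domL n \<kappa> m) (Gset m)"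
    by (rule bij_betw_byWitness[where f' = "Linv n \<kappa>"]) (use left right in auto)
  show "p \<in> Gset m \<Longrightarrow> inv_into (domL n \<kappa> m) (Lmap n \<kappa>) p = Linv n \<kappa> p"
    using right bij_betw_imp_inj_on[OF bij] by (metis inv_into_f_f)
qed

section \<open>Partial derivatives and functions of compact support\<close>

definition has_partial_deriv ::
    "'n::finite \<Rightarrow> (real^'n \<Rightarrow> real) \<Rightarrow> (real^'n \<Rightarrow> real) \<Rightarrow> bool" where
  "has_partial_deriv i f f' \<longleftrightarrow> (\<forall>x. ((\<lambda>t. f (x + t *\<^sub>R axis i 1)) has_real_derivative f' x) (at 0))"

lemma partial_deriv_eqI: "has_partial_deriv i f f' \<Longrightarrow> partial_deriv i f = f'"
  unfolding has_partial_deriv_def partial_deriv_def by (auto intro!: ext DERIV_imp_deriv)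

lemma has_partial_deriv_cong: "has_partial_deriv i f f' \<Longrightarrow> (\<And>x. f' x = g x) \<Longrightarrow> has_partial_deriv i f g"
  unfolding has_partial_deriv_def by simp

lemma has_partial_deriv_on_line:
  assumes "has_partial_deriv i f f'"
  shows "((\<lambda>s. f (x + s *\<^sub>R axis i 1)) has_real_derivative f' (x + s *\<^sub>R axis i 1)) (at s)"
proof -
  have "((\<lambda>t. f ((x + s *\<^sub>R axis i 1) + t *\<^sub>R axis i 1)) has_real_derivative f' (x + s *\<^sub>R axis i 1)) (at 0)"
    using assms unfolding has_partial_deriv_def by blast
  then have "((\<lambda>t. f (x + (t + s) *\<^sub>R axis i 1)) has_real_derivative f' (x + s *\<^sub>R axis i 1)) (at 0)"
    by (simp add: scaleR_add_left add_ac)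
  then show ?thesis using DERIV_shift[of "\<lambda>t. f (x + t *\<^sub>R axis i 1)" _ 0 s] by simp
qed

lemma integral_partial_deriv_on_line:
  assumes "has_partial_deriv i f f'" "a \<le> b"
  shows "integral {a..b} (\<lambda>s. f' (x + s *\<^sub>R axis i 1)) = f (x + b *\<^sub>R axis i 1) - f (x + a *\<^sub>R axis i 1)"
proof -
  have "((\<lambda>s. f' (x + s *\<^sub>R axis i 1)) has_integral f (x + b *\<^sub>R axis i 1) - f (x + a *\<^sub>R axis i 1)) {a..b}"
    using has_partial_deriv_on_line[OF assms(1)] assms(2)
    by (intro fundamental_theorem_of_calculus)
       (simp_all add: has_real_derivative_iff_has_vector_derivative has_vector_derivative_at_within)
  then show ?thesis by (rule integral_unique)
qed

lemma has_partial_deriv_const: "has_partial_deriv i (\<lambda>x. c) (\<lambda>x. 0)"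
  unfolding has_partial_deriv_def by (auto intro: derivative_intros)

lemma has_partial_deriv_coord: "has_partial_deriv i (\<lambda>x. x $ j) (\<lambda>x. if j = i then 1 else 0)"
  unfolding has_partial_deriv_def by (auto simp: axis_def intro!: derivative_eq_intros)

lemma norm_power2_add_axis:
  "norm (x + t *\<^sub>R axis i 1 :: real^'n) ^ 2 = norm x ^ 2 + 2 * t * x $ i + t ^ 2"
proof -
  have "norm (x + t *\<^sub>R axis i 1) ^ 2 = inner (x + t *\<^sub>R axis i 1) (x + t *\<^sub>R axis i 1)"
    by (rule power2_norm_eq_inner)
  also have "\<dots> = inner x x + 2 * t * x $ i + t ^ 2"
    by (simp add: inner_add_left inner_add_right inner_axis inner_axis' power2_eq_square algebra_simps)
  finally show ?thesis by (simp add: power2_norm_eq_inner)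
qed

lemma has_partial_deriv_norm_power2: "has_partial_deriv i (\<lambda>x. norm x ^ 2) (\<lambda>x. 2 * x $ i)"
  unfolding has_partial_deriv_def norm_power2_add_axis by (auto intro!: derivative_eq_intros)

lemma has_partial_deriv_add:
  "has_partial_deriv i f f' \<Longrightarrow> has_partial_deriv i g g' \<Longrightarrow>
    has_partial_deriv i (\<lambda>x. f x + g x) (\<lambda>x. f' x + g' x)"
  unfolding has_partial_deriv_def by (auto intro: derivative_intros)

lemma has_partial_deriv_mult:
  "has_partial_deriv i f f' \<Longrightarrow> has_partial_deriv i g g' \<Longrightarrow>
    has_partial_deriv i (\<lambda>x. f x * g x) (\<lambda>x. f' x * g x + f x * g' x)"
  unfolding has_partial_deriv_def by (auto intro!: derivative_eq_intros)

lemma has_partial_deriv_compose: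
  assumes "\<And>y. (h has_real_derivative h' y) (at y)" "has_partial_deriv i f f'"
  shows "has_partial_deriv i (\<lambda>x. h (f x)) (\<lambda>x. h' (f x) * f' x)"
  using assms DERIV_chain2[OF assms(1)] unfolding has_partial_deriv_def by fastforce

lemma has_partial_deriv_inverse:
  assumes "has_partial_deriv i f f'" "\<And>x. f x \<noteq> 0"
  shows "has_partial_deriv i (\<lambda>x. inverse (f x)) (\<lambda>x. - (inverse (f x) * f' x * inverse (f x)))"
  using assms DERIV_inverse' unfolding has_partial_deriv_def by fastforce

lemma smooth_fun_has_partial_deriv:
  "smooth_fun f \<Longrightarrow> has_partial_deriv i (iter_partial is f) (iter_partial (i # is) f)"
  unfolding smooth_fun_def has_partial_deriv_def
  by (simp add: partial_deriv_def DERIV_deriv_iff_real_differentiable)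

lemma smooth_fun_continuous: "smooth_fun f \<Longrightarrow> continuous_on UNIV (iter_partial is f)"
  unfolding smooth_fun_def by blast

lemma smooth_fun_continuous_partial_deriv:
  assumes "smooth_fun f"
  shows "continuous_on UNIV f" "continuous_on UNIV (partial_deriv i f)"
  using smooth_fun_continuous[OF assms, of "[]"] smooth_fun_continuous[OF assms, of "[i]"] by simp_all

lemma partial_deriv_eq_0_outside:
  fixes f :: "real^'n \<Rightarrow> real"
  assumes "closed K" "\<And>y. y \<notin> K \<Longrightarrow> f y = 0" "x \<notin> K"
  shows "partial_deriv i f x = 0"
proof -
  have "open (- K)" using assms(1) by auto
  then obtain d where d: "0 < d" "ball x d \<subseteq> - K"
    using assms(3) by (meson ComplI open_contains_ball)
  have "((\<lambda>t. f (x + t *\<^sub>R axis i 1)) has_real_derivative 0) (at 0)"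
  proof (rule has_field_derivative_transform_within[where S = UNIV and d = d, simplified])
    show "((\<lambda>t. 0) has_real_derivative 0) (at 0)" by simp
    fix t :: real assume "dist t 0 < d"
    then have "x + t *\<^sub>R axis i 1 \<in> ball x d" by (simp add: dist_norm)
    then show "0 = f (x + t *\<^sub>R axis i 1)" using d assms(2) by auto
  qed (rule d(1))
  then show ?thesis unfolding partial_deriv_def by (rule DERIV_imp_deriv)
qed

lemma compact_support_obtain:
  fixes f :: "real^'n \<Rightarrow> real"
  assumes "compact_support f"
  obtains K where "compact K" "\<And>x. x \<notin> K \<Longrightarrow> f x = 0"
    "\<And>i x. x \<notin> K \<Longrightarrow> partial_deriv i f x = 0"
proof -
  define K where "K = closure {x. f x \<noteq> 0}"
  have "compact K" using assms by (simp add: K_def compact_support_def)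
  moreover have vanish: "f x = 0" if "x \<notin> K" for x
    using that closure_subset[of "{x. f x \<noteq> 0}"] unfolding K_def by blast
  moreover have "partial_deriv i f x = 0" if "x \<notin> K" for i x
  proof (rule partial_deriv_eq_0_outside)
    show "closed K" by (simp add: K_def)
  qed (use vanish that in auto)
  ultimately show ?thesis using that by blast
qed

lemma integral_UNIV_eq_cbox:
  fixes f :: "real^'n \<Rightarrow> real"
  assumes "continuous_on UNIV f" "\<And>x. x \<notin> K \<Longrightarrow> f x = 0" "K \<subseteq> cbox a b"
  shows "f integrable_on UNIV" "integral UNIV f = integral (cbox a b) f"
proof -
  have "(f has_integral integral (cbox a b) f) (cbox a b)"
    using assms(1) by (intro integrable_integral integrable_continuous) (auto intro: continuous_on_subset)
  then have "(f has_integral integral (cbox a b) f) UNIV"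
    by (rule has_integral_on_superset) (use assms in auto)
  then show "f integrable_on UNIV" "integral UNIV f = integral (cbox a b) f"
    by (auto simp: integral_unique)
qed

lemma integrable_if_vanishes_outside_compact:
  fixes f :: "real^'n \<Rightarrow> real"
  assumes "continuous_on UNIV f" "compact K" "\<And>x. x \<notin> K \<Longrightarrow> f x = 0"
  shows "f integrable_on UNIV"
proof -
  obtain a where "K \<subseteq> cbox (-a) a"
    using compact_imp_bounded[OF assms(2)] bounded_subset_cbox_symmetric by metis
  then show ?thesis using integral_UNIV_eq_cbox(1)[OF assms(1,3)] by blast
qed

lemma integral_translate_cbox:
  fixes f :: "real^'n \<Rightarrow> real"
  assumes "continuous_on UNIV f" "\<And>x. x \<notin> K \<Longrightarrow> f x = 0" "K \<subseteq> cbox (a + v) (b + v)"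
  shows "integral (cbox a b) (\<lambda>x. f (x + v)) = integral UNIV f"
proof -
  have "integral (cbox a b) (\<lambda>x. f (x + v)) = integral (cbox (a + v) (b + v)) f"
    using integral_shift_cbox_plus[of a b f v] by (simp add: o_def add.commute)
  also have "\<dots> = integral UNIV f" using integral_UNIV_eq_cbox(2)[OF assms] by simp
  finally show ?thesis .
qed

lemma continuous_on_along_line:
  fixes f :: "real^'n \<Rightarrow> real"
  assumes "continuous_on UNIV f"
  shows "continuous_on S (\<lambda>(x, s::real). f (x + s *\<^sub>R v))"
proof -
  have "continuous_on S (\<lambda>p. f (fst p + snd p *\<^sub>R v))"
    by (rule continuous_on_compose2[OF assms]) (auto intro!: continuous_intros)
  then show ?thesis by (simp add: case_prod_beta)
qed

text \<open>Integrate the fundamental theorem of calculus on the segments \<open>[x, x + e]\<close> over a cube \<open>Q\<close>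
  and swap the integrals; the translates of \<open>Q\<close> by \<open>s e\<close>, \<open>0 \<le> s \<le> 1\<close>, still contain the support.\<close>
lemma integral_partial_deriv_eq_0:
  fixes f f' :: "real^'n \<Rightarrow> real"
  assumes f': "has_partial_deriv i f f'" and cf: "continuous_on UNIV f"
    and cf': "continuous_on UNIV f'" and K: "compact K"
    and vanish: "\<And>x. x \<notin> K \<Longrightarrow> f x = 0 \<and> f' x = 0"
  shows "integral UNIV f' = 0"
proof -
  define e where "e = axis i (1::real)"
  obtain a where a: "K \<subseteq> cbox (-a) a"
    using compact_imp_bounded[OF K] bounded_subset_cbox_symmetric by metis
  define Q where "Q = cbox (-a - e) a"
  have KQ: "K \<subseteq> cbox (-a - e + s *\<^sub>R e) (a + s *\<^sub>R e)" if "0 \<le> s" "s \<le> 1" for s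
  proof
    fix x assume "x \<in> K"
    then have x: "-a $ j \<le> x $ j \<and> x $ j \<le> a $ j" for j using a by (auto simp: mem_box_cart)
    have "(-a - e + s *\<^sub>R e) $ j \<le> x $ j \<and> x $ j \<le> (a + s *\<^sub>R e) $ j" for j
    proof -
      have "0 \<le> s * e $ j" "s * e $ j \<le> e $ j"
        using that by (auto simp: e_def axis_def)
      then show ?thesis using x[of j] by simp
    qed
    then show "x \<in> cbox (-a - e + s *\<^sub>R e) (a + s *\<^sub>R e)" by (simp add: mem_box_cart)
  qed
  have "integral Q (\<lambda>x. integral {0..1} (\<lambda>s. f' (x + s *\<^sub>R e)))
      = integral Q (\<lambda>x. f (x + e)) - integral Q (\<lambda>x. f (x + 0))"
    using integral_partial_deriv_on_line[OF f', of 0 1] cf unfolding Q_def e_def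
    by (auto intro!: integral_diff integrable_continuous continuous_on_compose2[OF cf] continuous_intros)
  also have "\<dots> = 0"
    using integral_translate_cbox[OF cf _ KQ[of 1]] integral_translate_cbox[OF cf _ KQ[of 0]] vanish
    by (simp add: Q_def)
  finally have "integral Q (\<lambda>x. integral (cbox 0 1) (\<lambda>s. f' (x + s *\<^sub>R e))) = 0"
    by (simp add: cbox_interval)
  moreover have "integral Q (\<lambda>x. integral (cbox 0 1) (\<lambda>s. f' (x + s *\<^sub>R e)))
      = integral (cbox 0 (1::real)) (\<lambda>s. integral Q (\<lambda>x. f' (x + s *\<^sub>R e)))"
    unfolding Q_def using continuous_on_along_line[OF cf']
    by (rule integral_swap_continuous[where f = "\<lambda>x s. f' (x + s *\<^sub>R e)"])
  moreover have "integral (cbox 0 1) (\<lambda>s. integral Q (\<lambda>x. f' (x + s *\<^sub>R e)))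
      = integral (cbox 0 (1::real)) (\<lambda>s. integral UNIV f')"
    by (rule integral_cong) (use integral_translate_cbox[OF cf' _ KQ] vanish in \<open>simp add: Q_def\<close>)
  ultimately show ?thesis by simp
qed

section \<open>A Hardy inequality\<close>

definition hardy_weight :: "real^'n::finite \<Rightarrow> real" where
  "hardy_weight x = inverse (1 + norm x ^ 2)"

lemma hardy_weight_pos: "0 < hardy_weight x"
  by (simp add: hardy_weight_def add_pos_nonneg)

lemma continuous_on_hardy_weight: "continuous_on UNIV hardy_weight"
  unfolding hardy_weight_def
  by (intro continuous_intros) (simp add: add_pos_nonneg less_imp_neq[symmetric])

lemma has_partial_deriv_hardy_weight:
  "has_partial_deriv i hardy_weight (\<lambda>x. - 2 * x $ i * hardy_weight x ^ 2)"
proof -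
  have "has_partial_deriv i (\<lambda>x. 1 + norm x ^ 2) (\<lambda>x. 0 + 2 * x $ i)"
    by (rule has_partial_deriv_add[OF has_partial_deriv_const has_partial_deriv_norm_power2])
  from has_partial_deriv_inverse[OF this] show ?thesis
    unfolding hardy_weight_def[abs_def]
    by (rule has_partial_deriv_cong) (auto simp: add_pos_nonneg less_imp_neq[symmetric] power2_eq_square)
qed

text \<open>The \<open>i\<close>-th partial derivative of the \<open>i\<close>-th component of the field
  \<open>w\<^sup>2 x / (1 + \<bar>x\<bar>\<^sup>2)\<close>; summed over \<open>i\<close> it is the divergence of the field.\<close>
definition hardy_field_deriv :: "(real^'n::finite \<Rightarrow> real) \<Rightarrow> 'n \<Rightarrow> real^'n \<Rightarrow> real" where
  "hardy_field_deriv w i x = 2 * w x * partial_deriv i w x * x $ i * hardy_weight x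
     + w x ^ 2 * (hardy_weight x - 2 * (x $ i) ^ 2 * hardy_weight x ^ 2)"

lemma integral_hardy_field_deriv:
  fixes w :: "real^'n::finite \<Rightarrow> real"
  assumes "smooth_fun w" "compact_support w"
  shows "hardy_field_deriv w i integrable_on UNIV" "integral UNIV (hardy_field_deriv w i) = 0"
proof -
  obtain K where K: "compact K" and vanish: "\<And>x. x \<notin> K \<Longrightarrow> w x = 0"
    "\<And>i x. x \<notin> K \<Longrightarrow> partial_deriv i w x = 0"
    using compact_support_obtain[OF assms(2)] by blast
  have w': "has_partial_deriv i w (partial_deriv i w)"
    using smooth_fun_has_partial_deriv[OF assms(1), of i "[]"] by simp
  have field: "has_partial_deriv i (\<lambda>x. w x * w x * (x $ i * hardy_weight x)) (hardy_field_deriv w i)"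
    by (rule has_partial_deriv_cong[OF has_partial_deriv_mult[OF has_partial_deriv_mult[OF w' w']
          has_partial_deriv_mult[OF has_partial_deriv_coord has_partial_deriv_hardy_weight]]])
       (simp add: hardy_field_deriv_def algebra_simps power2_eq_square)
  note cw = smooth_fun_continuous_partial_deriv[OF assms(1)]
  have cD: "continuous_on UNIV (hardy_field_deriv w i)"
    unfolding hardy_field_deriv_def[abs_def]
    by (intro continuous_intros cw continuous_on_hardy_weight)
  show "integral UNIV (hardy_field_deriv w i) = 0"
  proof (rule integral_partial_deriv_eq_0[OF field _ cD K])
    show "continuous_on UNIV (\<lambda>x. w x * w x * (x $ i * hardy_weight x))"
      by (intro continuous_intros cw continuous_on_hardy_weight)
  qed (use vanish in \<open>simp add: hardy_field_deriv_def\<close>)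
  show "hardy_field_deriv w i integrable_on UNIV"
    using vanish by (intro integrable_if_vanishes_outside_compact[OF cD K]) (simp add: hardy_field_deriv_def)
qed

lemma sum_hardy_field_deriv:
  fixes w :: "real^'n::finite \<Rightarrow> real" and x :: "real^'n"
  defines "r \<equiv> norm x ^ 2"
  shows "(\<Sum>i\<in>UNIV. hardy_field_deriv w i x)
    = 2 * w x * (\<Sum>i\<in>UNIV. partial_deriv i w x * x $ i) / (1 + r)
      + w x ^ 2 * (real CARD('n) / (1 + r) - 2 * r / (1 + r) ^ 2)"
proof -
  have r: "r = (\<Sum>i\<in>UNIV. (x $ i) ^ 2)"
    unfolding r_def power2_norm_eq_inner by (simp add: inner_vec_def power2_eq_square)
  have "hardy_field_deriv w i x = 2 * w x * (partial_deriv i w x * x $ i) / (1 + r)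
      + w x ^ 2 * (1 / (1 + r)) - w x ^ 2 * (2 * (x $ i) ^ 2 / (1 + r) ^ 2)" for i
    by (simp add: hardy_field_deriv_def hardy_weight_def r_def divide_inverse power_inverse algebra_simps)
  then have "(\<Sum>i\<in>UNIV. hardy_field_deriv w i x)
      = (\<Sum>i\<in>UNIV. 2 * w x * (partial_deriv i w x * x $ i) / (1 + r))
        + (\<Sum>i\<in>(UNIV::'n set). w x ^ 2 * (1 / (1 + r)))
        - (\<Sum>i\<in>UNIV. w x ^ 2 * (2 * (x $ i) ^ 2 / (1 + r) ^ 2))"
    by (simp add: sum.distrib sum_subtractf)
  also have "\<dots> = 2 * w x * (\<Sum>i\<in>UNIV. partial_deriv i w x * x $ i) / (1 + r)
      + w x ^ 2 * (real CARD('n) / (1 + r)) - w x ^ 2 * (2 * r / (1 + r) ^ 2)"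
    unfolding r by (simp add: sum_distrib_left[symmetric] sum_divide_distrib[symmetric])
  finally show ?thesis by (simp add: algebra_simps)
qed

lemma hardy_pointwise:
  fixes w S P r :: real and N :: nat
  assumes "0 \<le> P" "0 \<le> r" "S ^ 2 \<le> r * P" "3 \<le> N"
  shows "w ^ 2 / (2 * (1 + r)) \<le> 2 * w * S / (1 + r) + w ^ 2 * (N / (1 + r) - 2 * r / (1 + r) ^ 2) + 2 * P"
proof -
  define q where "q = 1 + r"
  have q: "0 < q" "r \<le> q" using assms(2) by (auto simp: q_def)
  have "(w + 2 * S) ^ 2 = w ^ 2 + 4 * (w * S) + 4 * S ^ 2"
    by (simp add: power2_eq_square algebra_simps)
  then have "- (2 * w * S) \<le> w ^ 2 / 2 + 2 * q * P"
    using zero_le_power2[of "w + 2 * S"] assms(3) mult_right_mono[OF q(2) assms(1)] by linarith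
  then have "- (2 * w * S) / q \<le> (w ^ 2 / 2 + 2 * q * P) / q"
    using q by (intro divide_right_mono) auto
  also have "\<dots> = w ^ 2 / (2 * q) + 2 * P" using q by (simp add: field_simps)
  finally have amgm: "- (2 * w * S / q) \<le> w ^ 2 / (2 * q) + 2 * P" by simp
  have "3 * q \<le> N * q" using assms(4) q by (intro mult_right_mono) auto
  then have "q \<le> N * q - 2 * r" using q by linarith
  then have "q / q ^ 2 \<le> (N * q - 2 * r) / q ^ 2" using q by (intro divide_right_mono) auto
  then have "1 / q \<le> N / q - 2 * r / q ^ 2"
    using q by (simp add: diff_divide_distrib power2_eq_square)
  then have "w ^ 2 * (1 / q) \<le> w ^ 2 * (N / q - 2 * r / q ^ 2)" by (intro mult_left_mono) auto
  moreover have "w ^ 2 * (1 / q) = w ^ 2 / (2 * q) + w ^ 2 / (2 * q)" by (simp add: field_simps)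
  ultimately show ?thesis using amgm unfolding q_def[symmetric] by linarith
qed

lemma smooth_fun_energy_integrable:
  fixes w :: "real^'n::finite \<Rightarrow> real"
  assumes "smooth_fun w" "compact_support w"
  shows "(\<lambda>x. \<Sum>i\<in>UNIV. (partial_deriv i w x) ^ 2) integrable_on UNIV"
    and "(\<lambda>x. w x ^ 2 * hardy_weight x) integrable_on UNIV"
proof -
  obtain K where K: "compact K" and vanish: "\<And>x. x \<notin> K \<Longrightarrow> w x = 0"
    "\<And>i x. x \<notin> K \<Longrightarrow> partial_deriv i w x = 0"
    using compact_support_obtain[OF assms(2)] by blast
  note cw = smooth_fun_continuous_partial_deriv[OF assms(1)]
  show "(\<lambda>x. \<Sum>i\<in>UNIV. (partial_deriv i w x) ^ 2) integrable_on UNIV"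
    using vanish by (intro integrable_if_vanishes_outside_compact[OF _ K] continuous_intros cw) auto
  show "(\<lambda>x. w x ^ 2 * hardy_weight x) integrable_on UNIV"
    using vanish
    by (intro integrable_if_vanishes_outside_compact[OF _ K] continuous_intros cw continuous_on_hardy_weight)
       auto
qed

theorem hardy_inequality:
  fixes w :: "real^'n::finite \<Rightarrow> real"
  assumes sm: "smooth_fun w" and cs: "compact_support w" and N: "3 \<le> CARD('n)"
  shows "integral UNIV (\<lambda>x. w x ^ 2 / (1 + norm x ^ 2))
    \<le> 4 * integral UNIV (\<lambda>x. \<Sum>i\<in>UNIV. (partial_deriv i w x) ^ 2)"
proof -
  define P where "P = (\<lambda>x. \<Sum>i\<in>UNIV. (partial_deriv i w x) ^ 2)"
  define h where "h = (\<lambda>x. w x ^ 2 / (1 + norm x ^ 2))"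
  have iP: "P integrable_on UNIV" unfolding P_def by (rule smooth_fun_energy_integrable(1)[OF sm cs])
  have "h = (\<lambda>x. w x ^ 2 * hardy_weight x)" by (simp add: h_def hardy_weight_def divide_inverse)
  then have ih: "h integrable_on UNIV" using smooth_fun_energy_integrable(2)[OF sm cs] by simp
  have pointwise: "h x / 2 \<le> (\<Sum>i\<in>UNIV. hardy_field_deriv w i x) + 2 * P x" for x
  proof -
    define S where "S = (\<Sum>i\<in>UNIV. partial_deriv i w x * x $ i)"
    have "inner (\<chi> i. partial_deriv i w x) x ^ 2
        \<le> inner (\<chi> i. partial_deriv i w x) (\<chi> i. partial_deriv i w x) * inner x x"
      by (rule Cauchy_Schwarz_ineq)
    moreover have "inner (\<chi> i. partial_deriv i w x) x = S"
      by (simp add: inner_vec_def S_def)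
    moreover have "inner (\<chi> i. partial_deriv i w x) (\<chi> i. partial_deriv i w x) = P x"
      by (simp add: inner_vec_def P_def power2_eq_square)
    ultimately have "S ^ 2 \<le> norm x ^ 2 * P x"
      by (simp add: power2_norm_eq_inner mult.commute)
    moreover have "0 \<le> P x" by (simp add: P_def sum_nonneg)
    ultimately have "w x ^ 2 / (2 * (1 + norm x ^ 2)) \<le> (\<Sum>i\<in>UNIV. hardy_field_deriv w i x) + 2 * P x"
      using hardy_pointwise[of "P x" "norm x ^ 2" S "CARD('n)" "w x"] N
      unfolding sum_hardy_field_deriv S_def[symmetric] by simp
    moreover have "h x / 2 = w x ^ 2 / (2 * (1 + norm x ^ 2))" by (simp add: h_def)
    ultimately show ?thesis by linarith
  qed
  have "integral UNIV (\<lambda>x. h x / 2)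
      \<le> integral UNIV (\<lambda>x. (\<Sum>i\<in>UNIV. hardy_field_deriv w i x) + 2 * P x)"
    using pointwise ih iP integral_hardy_field_deriv(1)[OF sm cs]
    by (intro integral_le) (auto intro!: integrable_add integrable_sum integrable_cmul)
  also have "\<dots> = (\<Sum>i\<in>UNIV. integral UNIV (hardy_field_deriv w i)) + 2 * integral UNIV P"
    using iP integral_hardy_field_deriv(1)[OF sm cs]
    by (simp add: integral_add integrable_sum integral_sum)
  also have "\<dots> = 2 * integral UNIV P" using integral_hardy_field_deriv(2)[OF sm cs] by simp
  finally have "integral UNIV h / 2 \<le> 2 * integral UNIV P" by simp
  then show ?thesis by (simp add: h_def P_def)
qed

section \<open>A lower bound for the energy\<close>

text \<open>Thin boxes along the distinguished axis \<open>undefined\<close> of \<open>flat_disc\<close>: the cross-section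
  has \<open>\<ell>\<^sub>1\<close>-radius \<open>1/2\<close>, so the projection of a point onto the hyperplane lies in the disc.\<close>
definition cylinder :: "real \<Rightarrow> real \<Rightarrow> (real^'n::finite) set" where
  "cylinder a b = cbox (\<chi> i. if i = undefined then a else - 1 / (2 * real CARD('n)))
                      (\<chi> i. if i = undefined then b else 1 / (2 * real CARD('n)))"

lemma mem_cylinder:
  "x \<in> (cylinder a b :: (real^'n::finite) set) \<longleftrightarrow>
    a \<le> x $ undefined \<and> x $ undefined \<le> b \<and>
    (\<forall>i. i \<noteq> undefined \<longrightarrow> \<bar>x $ i\<bar> \<le> 1 / (2 * real CARD('n)))"
  (is "?L \<longleftrightarrow> ?R")
proof
  assume ?L
  then have H: "(if i = undefined then a else - 1 / (2 * real CARD('n))) \<le> x $ i \<and>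
      x $ i \<le> (if i = undefined then b else 1 / (2 * real CARD('n)))" for i
    by (simp add: cylinder_def mem_box_cart)
  show ?R
  proof (intro conjI allI impI)
    fix i :: 'n assume "i \<noteq> undefined"
    then show "\<bar>x $ i\<bar> \<le> 1 / (2 * real CARD('n))" using H[of i] by (simp add: abs_le_iff)
  qed (use H[of undefined] in simp_all)
next
  assume ?R
  then show ?L by (auto simp: cylinder_def mem_box_cart abs_le_iff)
qed

lemma cylinder_proj_in_flat_disc:
  fixes x :: "real^'n::finite"
  assumes "x \<in> cylinder a b"
  shows "x - (x $ undefined) *\<^sub>R axis undefined 1 \<in> flat_disc TYPE('n)"
proof -
  define y where "y = x - (x $ undefined) *\<^sub>R axis undefined (1::real)"
  have y: "y $ i = (if i = undefined then 0 else x $ i)" for i by (simp add: y_def axis_def)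
  have "norm y \<le> (\<Sum>i\<in>UNIV. \<bar>y $ i\<bar>)" by (rule norm_le_l1_cart)
  also have "\<dots> \<le> (\<Sum>i\<in>(UNIV::'n set). 1 / (2 * real CARD('n)))"
    using assms by (intro sum_mono) (simp add: y mem_cylinder)
  also have "\<dots> < 1" by simp
  finally show ?thesis by (simp add: flat_disc_def y_def[symmetric] y)
qed

lemma norm_le_in_cylinder:
  fixes x :: "real^'n::finite"
  assumes "x \<in> cylinder 0 1"
  shows "norm x \<le> 3 / 2"
proof -
  have "\<bar>x $ i\<bar> \<le> (if i = undefined then 1 else 0) + 1 / (2 * real CARD('n))" for i
    using assms by (cases "i = undefined") (auto simp: mem_cylinder add_increasing2)
  then have "norm x \<le> (\<Sum>i\<in>(UNIV::'n set). (if i = undefined then 1 else 0) + 1 / (2 * real CARD('n)))"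
    by (intro order.trans[OF norm_le_l1_cart] sum_mono)
  also have "\<dots> = 3 / 2" by (simp add: sum.distrib)
  finally show ?thesis .
qed

lemma measure_cylinder_pos:
  assumes "a < b"
  shows "0 < measure lborel (cylinder a b :: (real^'n::finite) set)"
  unfolding cylinder_def
proof (rule content_pos_lt, intro ballI)
  fix v :: "real^'n" assume "v \<in> Basis"
  then obtain j where "v = axis j 1" by (auto simp: Basis_vec_def)
  then show "(\<chi> i. if i = undefined then a else - 1 / (2 * real CARD('n))) \<bullet> v
      < (\<chi> i. if i = undefined then b else 1 / (2 * real CARD('n))) \<bullet> v"
    using assms by (simp add: inner_axis)
qed

lemma cylinder_mono: "a' \<le> a \<Longrightarrow> b \<le> b' \<Longrightarrow> cylinder a b \<subseteq> cylinder a' b'"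
  by (auto simp: mem_cylinder)

lemma integral_cylinder_translate:
  fixes f :: "real^'n::finite \<Rightarrow> real"
  shows "integral (cylinder a b) (\<lambda>x. f (x + s *\<^sub>R axis undefined 1))
    = integral (cylinder (a + s) (b + s)) f"
proof -
  have "(\<chi> i. if i = undefined then c else d) + s *\<^sub>R axis undefined 1
      = (\<chi> i::'n. if i = undefined then c + s else d)" for c d
    by (simp add: vec_eq_iff axis_def)
  then show ?thesis
    using integral_shift_cbox_plus[of _ _ f "s *\<^sub>R axis undefined 1"]
    by (simp add: cylinder_def o_def add.commute)
qed

lemma continuous_on_integrable_cylinder:
  fixes f :: "real^'n::finite \<Rightarrow> real"
  assumes "continuous_on UNIV f"
  shows "f integrable_on cylinder a b"
  unfolding cylinder_def by (rule integrable_continuous, rule continuous_on_subset[OF assms]) simp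

text \<open>Going down the distinguished axis from \<open>x\<close> one reaches the disc, where \<open>w = 1\<close>.\<close>
lemma one_le_in_cylinder:
  fixes w :: "real^'n::finite \<Rightarrow> real"
  assumes w': "has_partial_deriv undefined w p" and cp: "continuous_on UNIV p"
    and one: "\<forall>x \<in> flat_disc TYPE('n). w x = 1" and x: "x \<in> cylinder 0 1"
  shows "1 \<le> \<bar>w x\<bar> + integral {-1..0} (\<lambda>s. \<bar>p (x + s *\<^sub>R axis undefined 1)\<bar>)"
proof -
  define e where "e = axis (undefined::'n) (1::real)"
  define a where "a = x $ undefined"
  have a: "0 \<le> a" "a \<le> 1" using x by (auto simp: a_def mem_cylinder)
  have cpl: "continuous_on S (\<lambda>s. p (x + s *\<^sub>R e))" for S
    by (rule continuous_on_compose2[OF cp]) (auto intro!: continuous_intros)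
  have "integral {-a..0} (\<lambda>s. p (x + s *\<^sub>R e)) = w x - w (x + (-a) *\<^sub>R e)"
    using integral_partial_deriv_on_line[OF w', of "-a" 0 x] a by (simp add: e_def)
  also have "w (x + (-a) *\<^sub>R e) = 1"
    using cylinder_proj_in_flat_disc[OF x] one by (simp add: e_def a_def)
  finally have "\<bar>w x - 1\<bar> \<le> integral {-a..0} (\<lambda>s. \<bar>p (x + s *\<^sub>R e)\<bar>)"
    using integral_norm_bound_integral[of "\<lambda>s. p (x + s *\<^sub>R e)" "{-a..0}" "\<lambda>s. \<bar>p (x + s *\<^sub>R e)\<bar>"]
    by (simp add: integrable_continuous_interval cpl continuous_on_rabs)
  also have "\<dots> \<le> integral {-1..0} (\<lambda>s. \<bar>p (x + s *\<^sub>R e)\<bar>)"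
    by (rule integral_subset_le) (use a in \<open>auto intro!: integrable_continuous_interval continuous_intros cpl\<close>)
  finally show ?thesis unfolding e_def by linarith
qed

lemma measure_cylinder_le_integrals:
  fixes w :: "real^'n::finite \<Rightarrow> real"
  assumes w': "has_partial_deriv undefined w p" and cp: "continuous_on UNIV p"
    and cw: "continuous_on UNIV w" and one: "\<forall>x \<in> flat_disc TYPE('n). w x = 1"
  shows "measure lborel (cylinder 0 1 :: (real^'n) set)
    \<le> integral (cylinder 0 1) (\<lambda>x. \<bar>w x\<bar>) + integral (cylinder (-1) 1) (\<lambda>x. \<bar>p x\<bar>)"
proof -
  define e where "e = axis (undefined::'n) (1::real)"
  define F where "F = (\<lambda>x s. \<bar>p (x + s *\<^sub>R e)\<bar>)"
  have cF: "continuous_on S (\<lambda>(x, s). F x s)" for S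
    using continuous_on_rabs[OF continuous_on_along_line[OF cp, of S e]]
    by (simp add: F_def case_prod_beta)
  define G where "G = (\<lambda>x. integral (cbox (-1) 0) (F x))"
  have cG: "continuous_on UNIV G"
    unfolding G_def by (rule integral_continuous_on_param) (rule cF)
  have cwa: "continuous_on UNIV (\<lambda>x. \<bar>w x\<bar>)" by (rule continuous_on_rabs[OF cw])
  have "measure lborel (cylinder 0 1 :: (real^'n) set) = integral (cylinder 0 1) (\<lambda>x::real^'n. 1::real)"
    by (simp add: cylinder_def)
  also have "\<dots> \<le> integral (cylinder 0 1) (\<lambda>x. \<bar>w x\<bar> + G x)"
    using one_le_in_cylinder[OF w' cp one] cw cG
    by (intro integral_le continuous_on_integrable_cylinder continuous_intros)
       (auto simp: G_def F_def e_def cbox_interval)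
  also have "\<dots> = integral (cylinder 0 1) (\<lambda>x. \<bar>w x\<bar>) + integral (cylinder 0 1) G"
    using cwa cG by (intro integral_add continuous_on_integrable_cylinder)
  also have "integral (cylinder 0 1) G = integral (cbox (-1) 0) (\<lambda>s. integral (cylinder 0 1) (\<lambda>x. F x s))"
    unfolding G_def cylinder_def by (rule integral_swap_continuous) (rule cF)
  also have "\<dots> \<le> integral (cbox (-1::real) 0) (\<lambda>s. integral (cylinder (-1) 1) (\<lambda>x. \<bar>p x\<bar>))"
  proof (rule integral_le)
    have "continuous_on (UNIV \<times> cylinder 0 1) (\<lambda>z. \<bar>p (snd z + fst z *\<^sub>R e)\<bar>)"
      by (intro continuous_on_rabs continuous_on_compose2[OF cp]) (auto intro!: continuous_intros)
    then have "continuous_on UNIV (\<lambda>s. integral (cylinder 0 1) (\<lambda>x. F x s))"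
      unfolding cylinder_def by (intro integral_continuous_on_param) (simp add: F_def case_prod_beta)
    then show "(\<lambda>s. integral (cylinder 0 1) (\<lambda>x. F x s)) integrable_on cbox (-1) 0"
      unfolding cbox_interval by (rule integrable_continuous_interval[OF continuous_on_subset]) simp
    fix s :: real assume "s \<in> cbox (-1) 0"
    then have "cylinder s (1 + s) \<subseteq> (cylinder (-1) 1 :: (real^'n) set)" by (intro cylinder_mono) auto
    then show "integral (cylinder 0 1) (\<lambda>x. F x s) \<le> integral (cylinder (-1) 1) (\<lambda>x. \<bar>p x\<bar>)"
      using cp integral_cylinder_translate[of 0 1 "\<lambda>x. \<bar>p x\<bar>" s]
      by (simp add: F_def e_def) (intro integral_subset_le continuous_on_integrable_cylinder continuous_intros; simp)
  qed (rule integrable_const)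
  also have "\<dots> = integral (cylinder (-1) 1) (\<lambda>x. \<bar>p x\<bar>)" by simp
  finally show ?thesis by simp
qed

lemma integral_abs_le_AM_GM:
  fixes u v :: "real^'n::finite \<Rightarrow> real"
  assumes cu: "continuous_on UNIV u" and cv: "continuous_on UNIV v" and iv: "v integrable_on UNIV"
    and v0: "\<And>x. 0 \<le> v x" and uv: "\<And>x. x \<in> cylinder a b \<Longrightarrow> u x ^ 2 \<le> v x" and "0 < l"
  shows "integral (cylinder a b) (\<lambda>x. \<bar>u x\<bar>)
    \<le> l / 2 * integral UNIV v + measure lborel (cylinder a b :: (real^'n) set) / (2 * l)"
proof -
  have "\<bar>u x\<bar> \<le> l / 2 * v x + 1 / (2 * l)" if "x \<in> cylinder a b" for x
  proof -
    have "0 \<le> (l * \<bar>u x\<bar> - 1) ^ 2" by simp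
    then have "\<bar>u x\<bar> \<le> l / 2 * u x ^ 2 + 1 / (2 * l)"
      using \<open>0 < l\<close> by (simp add: power2_eq_square field_simps)
    also have "\<dots> \<le> l / 2 * v x + 1 / (2 * l)"
      using uv[OF that] \<open>0 < l\<close> by simp
    finally show ?thesis .
  qed
  then have "integral (cylinder a b) (\<lambda>x. \<bar>u x\<bar>)
      \<le> integral (cylinder a b) (\<lambda>x. l / 2 * v x + 1 / (2 * l))"
    using cu cv by (intro integral_le continuous_on_integrable_cylinder continuous_intros) auto
  also have "\<dots> = integral (cylinder a b) (\<lambda>x. l / 2 * v x) + integral (cylinder a b) (\<lambda>x::real^'n. 1 / (2 * l))"
    by (rule integral_add) (use cv in \<open>auto intro!: continuous_on_integrable_cylinder continuous_intros\<close>)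
  also have "\<dots> = l / 2 * integral (cylinder a b) v + measure lborel (cylinder a b :: (real^'n) set) / (2 * l)"
    by (simp add: cylinder_def)
  also have "integral (cylinder a b) v \<le> integral UNIV v"
    using cv iv v0 by (intro integral_subset_le continuous_on_integrable_cylinder) auto
  finally show ?thesis using \<open>0 < l\<close> by simp
qed

lemma one_le_4_hardy_weight:
  assumes "x \<in> cylinder 0 1"
  shows "1 \<le> 4 * hardy_weight x"
proof -
  have "norm x ^ 2 \<le> (3 / 2) ^ 2" by (rule power_mono[OF norm_le_in_cylinder[OF assms]]) simp
  then show ?thesis by (simp add: hardy_weight_def field_simps add_pos_nonneg power2_eq_square)
qed

lemma energy_lower_bound:
  fixes w :: "real^'n::finite \<Rightarrow> real"
  assumes sm: "smooth_fun w" and cs: "compact_support w"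
    and one: "\<forall>x \<in> flat_disc TYPE('n). w x = 1" and N: "3 \<le> CARD('n)"
  defines "V1 \<equiv> measure lborel (cylinder 0 1 :: (real^'n) set)"
    and "V2 \<equiv> measure lborel (cylinder (-1) 1 :: (real^'n) set)"
  shows "V1 ^ 2 / (17 * (V1 + V2)) \<le> integral UNIV (\<lambda>x. \<Sum>i\<in>UNIV. (partial_deriv i w x) ^ 2)"
proof -
  note cw = smooth_fun_continuous_partial_deriv[OF sm]
  define P where "P = (\<lambda>x. \<Sum>i\<in>UNIV. (partial_deriv i w x) ^ 2)"
  define h where "h = (\<lambda>x. w x ^ 2 * hardy_weight x)"
  have cP: "continuous_on UNIV P" unfolding P_def by (intro continuous_intros cw)
  have ch: "continuous_on UNIV h" unfolding h_def by (intro continuous_intros cw continuous_on_hardy_weight)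
  have iP: "P integrable_on UNIV" and ih: "h integrable_on UNIV"
    unfolding P_def h_def by (rule smooth_fun_energy_integrable[OF sm cs])+
  have hardy: "integral UNIV h \<le> 4 * integral UNIV P"
    using hardy_inequality[OF sm cs N] by (simp add: h_def P_def hardy_weight_def divide_inverse)
  have V1: "0 < V1" unfolding V1_def by (rule measure_cylinder_pos) simp
  define l where "l = (V1 + V2) / V1"
  \<comment> \<open>weighting both AM-GM estimates by \<open>l\<close> makes their constant terms add up to \<open>V1 / 2\<close>\<close>
  have l: "0 < l" using V1 by (simp add: l_def V2_def add_pos_nonneg)
  have "V1 \<le> integral (cylinder 0 1) (\<lambda>x. \<bar>w x\<bar>) + integral (cylinder (-1) 1) (\<lambda>x. \<bar>partial_deriv undefined w x\<bar>)"
    unfolding V1_def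
    using smooth_fun_has_partial_deriv[OF sm, of undefined "[]"] cw one
    by (intro measure_cylinder_le_integrals) simp_all
  also have "integral (cylinder 0 1) (\<lambda>x. \<bar>w x\<bar>) \<le> l / 2 * integral UNIV (\<lambda>x. 4 * h x) + V1 / (2 * l)"
    unfolding V1_def
  proof (rule integral_abs_le_AM_GM[OF cw(1) _ _ _ _ l])
    show "w x ^ 2 \<le> 4 * h x" if "x \<in> cylinder 0 1" for x
      using mult_left_mono[OF one_le_4_hardy_weight[OF that], of "w x ^ 2"] by (simp add: h_def)
  qed (use ch ih in \<open>auto intro: continuous_intros simp: h_def hardy_weight_pos less_imp_le\<close>)
  also have "integral (cylinder (-1) 1) (\<lambda>x. \<bar>partial_deriv undefined w x\<bar>) \<le> l / 2 * integral UNIV P + V2 / (2 * l)"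
    unfolding V2_def by (rule integral_abs_le_AM_GM[OF cw(2) cP iP _ _ l])
       (auto simp: P_def sum_nonneg intro: member_le_sum)
  finally have "V1 \<le> l / 2 * (4 * integral UNIV h) + l / 2 * integral UNIV P + (V1 + V2) / (2 * l)"
    by (simp add: add_divide_distrib)
  also have "(V1 + V2) / (2 * l) = V1 / 2" using V1 l by (simp add: l_def field_simps)
  moreover have "l / 2 * (4 * integral UNIV h) \<le> l / 2 * (4 * (4 * integral UNIV P))"
    using hardy l by (intro mult_left_mono) auto
  ultimately have "V1 \<le> 17 * l * integral UNIV P" by linarith
  then have "V1 / (17 * l) \<le> integral UNIV P" using l by (simp add: pos_divide_le_eq mult.commute)
  moreover have "V1 / (17 * l) = V1 ^ 2 / (17 * (V1 + V2))" using V1 by (simp add: l_def power2_eq_square)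
  ultimately show ?thesis by (simp add: P_def)
qed

section \<open>A smooth cut-off function\<close>

text \<open>\<open>flat_exp 0\<close> is the classical flat function \<open>e\<^sup>-\<^sup>1\<^sup>/\<^sup>t\<close>; the factors \<open>t\<^sup>-\<^sup>k\<close> make the
  family closed under differentiation.\<close>
definition flat_exp :: "nat \<Rightarrow> real \<Rightarrow> real" where
  "flat_exp k t = (if 0 < t then inverse t ^ k * exp (- inverse t) else 0)"

lemma inverse_power_mult_exp_le:
  assumes t: "0 < (t::real)"
  shows "inverse t ^ (k + 1) * exp (- inverse t) \<le> real (k + 2) ^ (k + 2) * t"
proof -
  define n where "n = k + 2"
  define x where "x = inverse t"
  have x: "0 < x" using t by (simp add: x_def)
  have n: "0 < n" by (simp add: n_def)
  have "(x / real n) ^ n \<le> (1 + x / real n) ^ n"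
    using x n by (intro power_mono) auto
  also have "\<dots> \<le> exp x" by (rule exp_ge_one_plus_x_over_n_power_n) (use x n in auto)
  finally have ex: "(x / real n) ^ n \<le> exp x" .
  have xn0: "0 < (x / real n) ^ n" using x n by simp
  have "exp (- x) = inverse (exp x)" by (simp add: exp_minus)
  also have "\<dots> \<le> inverse ((x / real n) ^ n)" using ex xn0 by (rule le_imp_inverse_le)
  also have "\<dots> = real n ^ n * t ^ n" using t by (simp add: x_def power_divide power_inverse field_simps)
  finally have e: "exp (- x) \<le> real n ^ n * t ^ n" .
  have "x ^ (k + 1) * exp (- x) \<le> x ^ (k + 1) * (real n ^ n * t ^ n)"
    using e x by (intro mult_left_mono) auto
  also have "\<dots> = real n ^ n * t"
  proof -
    have "x ^ (k + 1) * t ^ n = t" using t by (simp add: x_def n_def power_inverse field_simps)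
    then show ?thesis by (simp add: algebra_simps)
  qed
  finally show ?thesis by (simp add: x_def n_def)
qed

lemma flat_exp_deriv_pos:
  assumes t: "0 < t"
  shows "(flat_exp k has_real_derivative (- real k * flat_exp (k + 1) t + flat_exp (k + 2) t)) (at t)"
proof -
  have tn: "t \<noteq> 0" using t by simp
  have d1: "((\<lambda>y. inverse y) has_real_derivative - (inverse t ^ Suc (Suc 0))) (at t)"
    by (rule DERIV_inverse[OF tn])
  have d2: "((\<lambda>y. inverse y ^ k) has_real_derivative of_nat k * (- (inverse t ^ Suc (Suc 0)) * inverse t ^ (k - Suc 0))) (at t)"
    by (rule DERIV_power[OF d1])
  have d3: "((\<lambda>y. exp (- inverse y)) has_real_derivative exp (- inverse t) * (- (- (inverse t ^ Suc (Suc 0))))) (at t)"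
    by (rule DERIV_fun_exp[OF DERIV_minus[OF d1]])
  have d: "((\<lambda>y. inverse y ^ k * exp (- inverse y)) has_real_derivative
      of_nat k * (- (inverse t ^ Suc (Suc 0)) * inverse t ^ (k - Suc 0)) * exp (- inverse t)
      + exp (- inverse t) * (- (- (inverse t ^ Suc (Suc 0)))) * inverse t ^ k) (at t)"
    by (rule DERIV_mult[OF d2 d3])
  have eq: "of_nat k * (- (inverse t ^ Suc (Suc 0)) * inverse t ^ (k - Suc 0)) * exp (- inverse t)
      + exp (- inverse t) * (- (- (inverse t ^ Suc (Suc 0)))) * inverse t ^ k = - real k * flat_exp (k + 1) t + flat_exp (k + 2) t"
  proof (cases k)
    case 0 then show ?thesis using t by (simp add: flat_exp_def)
  next
    case (Suc m)
    have "inverse t ^ Suc (Suc 0) * inverse t ^ (k - Suc 0) = inverse t ^ (k + 1)"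
      using Suc by (simp add: power_add[symmetric])
    moreover have "inverse t ^ Suc (Suc 0) * inverse t ^ k = inverse t ^ (k + 2)"
      by (simp add: power_add[symmetric])
    ultimately show ?thesis using t unfolding flat_exp_def by (simp add: algebra_simps)
  qed
  have "(flat_exp k has_real_derivative (of_nat k * (- (inverse t ^ Suc (Suc 0)) * inverse t ^ (k - Suc 0)) * exp (- inverse t)
      + exp (- inverse t) * (- (- (inverse t ^ Suc (Suc 0)))) * inverse t ^ k)) (at t)"
    by (rule has_field_derivative_transform_within_open[OF d, of "{0<..}"]) (use t in \<open>auto simp: flat_exp_def\<close>)
  then show ?thesis unfolding eq .
qed

lemma flat_exp_deriv_neg:
  assumes t: "t < 0"
  shows "(flat_exp k has_real_derivative (- real k * flat_exp (k + 1) t + flat_exp (k + 2) t)) (at t)"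
proof -
  have "((\<lambda>y. 0) has_real_derivative 0) (at t)" by simp
  then have "(flat_exp k has_real_derivative 0) (at t)"
    by (rule has_field_derivative_transform_within_open[of _ _ _ "{..<0}"]) (use t in \<open>auto simp: flat_exp_def\<close>)
  then show ?thesis using t by (simp add: flat_exp_def)
qed

lemma flat_exp_deriv_zero: "(flat_exp k has_real_derivative (- real k * flat_exp (k + 1) 0 + flat_exp (k + 2) 0)) (at 0)"
proof -
  define C where "C = real (k + 2) ^ (k + 2)"
  have "((\<lambda>y. (flat_exp k y - flat_exp k 0) / (y - 0)) \<longlongrightarrow> 0) (at 0)"
  proof (rule Lim_null_comparison)
    show "((\<lambda>y. C * \<bar>y\<bar>) \<longlongrightarrow> 0) (at (0::real))"
    proof -
      have "((\<lambda>y. C * \<bar>y\<bar>) \<longlongrightarrow> C * \<bar>0::real\<bar>) (at 0)" by (intro tendsto_intros)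
      then show ?thesis by simp
    qed
    show "\<forall>\<^sub>F y in at 0. norm ((flat_exp k y - flat_exp k 0) / (y - 0)) \<le> C * \<bar>y\<bar>"
    proof (rule always_eventually, intro allI)
      fix y :: real
      show "norm ((flat_exp k y - flat_exp k 0) / (y - 0)) \<le> C * \<bar>y\<bar>"
      proof (cases "0 < y")
        case True
        have "flat_exp k y / y = inverse y ^ (k + 1) * exp (- inverse y)"
          using True by (simp add: flat_exp_def divide_inverse)
        moreover have "inverse y ^ (k + 1) * exp (- inverse y) \<le> C * y" unfolding C_def by (rule inverse_power_mult_exp_le[OF True])
        moreover have "0 \<le> inverse y ^ (k + 1) * exp (- inverse y)" using True by simp
        ultimately show ?thesis using True by (simp add: flat_exp_def)
      next
        case False
        have "0 \<le> C" by (simp add: C_def)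
        then show ?thesis using False by (simp add: flat_exp_def mult_nonneg_nonpos)
      qed
    qed
  qed
  then have "(flat_exp k has_real_derivative 0) (at 0)" by (simp add: has_field_derivative_iff)
  then show ?thesis by (simp add: flat_exp_def)
qed

lemma flat_exp_deriv: "(flat_exp k has_real_derivative (- real k * flat_exp (k + 1) t + flat_exp (k + 2) t)) (at t)"
  using flat_exp_deriv_pos flat_exp_deriv_neg flat_exp_deriv_zero by (cases "0 < t"; cases "t < 0") auto

lemma continuous_on_flat_exp: "continuous_on UNIV (flat_exp k)"
  by (rule continuous_at_imp_continuous_on) (metis DERIV_isCont flat_exp_deriv)

inductive_set elementary_smooth :: "(real^'n::finite \<Rightarrow> real) set" where
  const: "(\<lambda>x. c) \<in> elementary_smooth"
| coord: "(\<lambda>x. x $ j) \<in> elementary_smooth"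
| norm_power2: "(\<lambda>x. norm x ^ 2) \<in> elementary_smooth"
| add: "f \<in> elementary_smooth \<Longrightarrow> g \<in> elementary_smooth \<Longrightarrow> (\<lambda>x. f x + g x) \<in> elementary_smooth"
| mult: "f \<in> elementary_smooth \<Longrightarrow> g \<in> elementary_smooth \<Longrightarrow> (\<lambda>x. f x * g x) \<in> elementary_smooth"
| flat_exp: "f \<in> elementary_smooth \<Longrightarrow> (\<lambda>x. flat_exp k (f x)) \<in> elementary_smooth"
| inverse: "f \<in> elementary_smooth \<Longrightarrow> (\<And>x. 0 < f x) \<Longrightarrow> (\<lambda>x. inverse (f x)) \<in> elementary_smooth"

lemma elementary_smooth_continuous:
  fixes f :: "real^'n::finite \<Rightarrow> real"
  shows "f \<in> elementary_smooth \<Longrightarrow> continuous_on UNIV f"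
proof (induction rule: elementary_smooth.induct)
  case (flat_exp f k)
  then show ?case by (intro continuous_on_compose2[OF continuous_on_flat_exp]) auto
next
  case (inverse f)
  then show ?case by (intro continuous_intros) (auto simp: less_imp_neq[symmetric])
qed (auto intro!: continuous_intros)

lemma elementary_smooth_has_partial_deriv:
  fixes f :: "real^'n::finite \<Rightarrow> real"
  shows "f \<in> elementary_smooth \<Longrightarrow> \<exists>f' \<in> elementary_smooth. has_partial_deriv i f f'"
proof (induction rule: elementary_smooth.induct)
  case (const c)
  then show ?case using has_partial_deriv_const elementary_smooth.const by blast
next
  case (coord j)
  have "(\<lambda>x::real^'n. if j = i then 1 else 0) \<in> elementary_smooth"
    by (rule elementary_smooth.const)
  then show ?case using has_partial_deriv_coord by blast
next
  case norm_power2
  have "(\<lambda>x::real^'n. 2 * x $ i) \<in> elementary_smooth"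
    by (intro elementary_smooth.intros)
  then show ?case using has_partial_deriv_norm_power2 by blast
next
  case (add f g)
  then obtain f' g' where "f' \<in> elementary_smooth" "has_partial_deriv i f f'"
    "g' \<in> elementary_smooth" "has_partial_deriv i g g'"
    by blast
  then have "has_partial_deriv i (\<lambda>x. f x + g x) (\<lambda>x. f' x + g' x)"
    "(\<lambda>x. f' x + g' x) \<in> elementary_smooth"
    by (auto intro: has_partial_deriv_add elementary_smooth.add)
  then show ?case by blast
next
  case (mult f g)
  then obtain f' g' where "f' \<in> elementary_smooth" "has_partial_deriv i f f'"
    "g' \<in> elementary_smooth" "has_partial_deriv i g g'"
    by blast
  then have "has_partial_deriv i (\<lambda>x. f x * g x) (\<lambda>x. f' x * g x + f x * g' x)"
    "(\<lambda>x. f' x * g x + f x * g' x) \<in> elementary_smooth"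
    using mult.hyps by (auto intro: has_partial_deriv_mult elementary_smooth.add elementary_smooth.mult)
  then show ?case by blast
next
  case (flat_exp f k)
  then obtain f' where f': "f' \<in> elementary_smooth" "has_partial_deriv i f f'" by blast
  have "has_partial_deriv i (\<lambda>x. flat_exp k (f x))
      (\<lambda>x. (- real k * flat_exp (k + 1) (f x) + flat_exp (k + 2) (f x)) * f' x)"
    by (rule has_partial_deriv_compose[OF flat_exp_deriv f'(2)])
  moreover have "(\<lambda>x. (- real k * flat_exp (k + 1) (f x) + flat_exp (k + 2) (f x)) * f' x)
      \<in> elementary_smooth"
    using f'(1) flat_exp.hyps by (intro elementary_smooth.intros)
  ultimately show ?case by blast
next
  case (inverse f)
  then obtain f' where f': "f' \<in> elementary_smooth" "has_partial_deriv i f f'" by blast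
  have "f x \<noteq> 0" for x using inverse.hyps(2)[of x] by simp
  then have "has_partial_deriv i (\<lambda>x. inverse (f x)) (\<lambda>x. - (inverse (f x) * f' x * inverse (f x)))"
    by (rule has_partial_deriv_inverse[OF f'(2)])
  then have "has_partial_deriv i (\<lambda>x. inverse (f x))
      (\<lambda>x. (-1) * (inverse (f x) * (f' x * inverse (f x))))"
    by (rule has_partial_deriv_cong) simp
  moreover have "(\<lambda>x. (-1) * (inverse (f x) * (f' x * inverse (f x)))) \<in> elementary_smooth"
    using f'(1) inverse.hyps
    by (intro elementary_smooth.mult elementary_smooth.const elementary_smooth.inverse)
  ultimately show ?case by blast
qed

lemma elementary_smooth_iter_partial: "f \<in> elementary_smooth \<Longrightarrow> iter_partial is f \<in> elementary_smooth"
proof (induction "is")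
  case (Cons i "is")
  then obtain f' where "f' \<in> elementary_smooth" "has_partial_deriv i (iter_partial is f) f'"
    using elementary_smooth_has_partial_deriv by blast
  then show ?case by (simp add: partial_deriv_eqI)
qed simp

lemma elementary_smooth_imp_smooth_fun:
  assumes "f \<in> elementary_smooth"
  shows "smooth_fun f"
  unfolding smooth_fun_def
proof (intro allI conjI)
  fix "is" i x
  have "iter_partial is f \<in> elementary_smooth" by (rule elementary_smooth_iter_partial[OF assms])
  then show "continuous_on UNIV (iter_partial is f)" by (rule elementary_smooth_continuous)
  from elementary_smooth_has_partial_deriv[OF \<open>iter_partial is f \<in> elementary_smooth\<close>]
  obtain f' where "has_partial_deriv i (iter_partial is f) f'" by blast
  then show "(\<lambda>t. iter_partial is f (x + t *\<^sub>R axis i 1)) differentiable (at 0)"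
    unfolding has_partial_deriv_def real_differentiable_def by blast
qed

lemma flat_exp_nonneg: "0 \<le> flat_exp k t"
  by (simp add: flat_exp_def)

lemma flat_exp_pos: "0 < t \<Longrightarrow> 0 < flat_exp 0 t"
  by (simp add: flat_exp_def)

definition bump :: "real^'n::finite \<Rightarrow> real" where
  "bump x = flat_exp 0 (4 - norm x ^ 2) * inverse (flat_exp 0 (4 - norm x ^ 2) + flat_exp 0 (norm x ^ 2 - 1))"

lemma bump_elementary_smooth: "bump \<in> elementary_smooth"
proof -
  have a: "(\<lambda>x::real^'n. 4 + (-1) * norm x ^ 2) \<in> elementary_smooth"
    by (intro elementary_smooth.add elementary_smooth.mult elementary_smooth.const elementary_smooth.norm_power2)
  have b: "(\<lambda>x::real^'n. norm x ^ 2 + (-1)) \<in> elementary_smooth"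
    by (intro elementary_smooth.add elementary_smooth.const elementary_smooth.norm_power2)
  have pos: "0 < flat_exp 0 (4 + (-1) * norm x ^ 2) + flat_exp 0 (norm x ^ 2 + (-1))" for x :: "real^'n"
  proof (cases "norm x ^ 2 < 4")
    case True
    then show ?thesis
      using flat_exp_pos[of "4 + (-1) * norm x ^ 2"] flat_exp_nonneg[of 0 "norm x ^ 2 + (-1)"] by simp
  next
    case False
    then show ?thesis
      using flat_exp_pos[of "norm x ^ 2 + (-1)"] flat_exp_nonneg[of 0 "4 + (-1) * norm x ^ 2"] by simp
  qed
  have "(\<lambda>x::real^'n. flat_exp 0 (4 + (-1) * norm x ^ 2)
      * inverse (flat_exp 0 (4 + (-1) * norm x ^ 2) + flat_exp 0 (norm x ^ 2 + (-1)))) \<in> elementary_smooth"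
    by (intro elementary_smooth.mult elementary_smooth.flat_exp elementary_smooth.inverse
        elementary_smooth.add a b pos)
  then show ?thesis by (simp add: bump_def[abs_def])
qed

lemma bump_eq_1: "norm x < 1 \<Longrightarrow> bump x = 1"
proof -
  assume "norm x < 1"
  then have "norm x ^ 2 < 1" by (simp add: power_less_one_iff abs_less_iff)
  then show "bump x = 1" using flat_exp_pos[of "4 - norm x ^ 2"] by (simp add: bump_def flat_exp_def)
qed

lemma compact_support_bump: "compact_support (bump :: real^'n::finite \<Rightarrow> real)"
proof -
  have "{x::real^'n. bump x \<noteq> 0} \<subseteq> cball 0 2"
  proof
    fix x :: "real^'n" assume "x \<in> {x. bump x \<noteq> 0}"
    moreover have "bump x = 0" if "4 \<le> norm x ^ 2" using that by (simp add: bump_def flat_exp_def)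
    ultimately have "norm x ^ 2 < 2 ^ 2" by fastforce
    then have "norm x < 2" by (rule power2_less_imp_less) simp
    then show "x \<in> cball 0 2" by simp
  qed
  then have "closure {x::real^'n. bump x \<noteq> 0} \<subseteq> cball 0 2" by (simp add: closure_minimal)
  then show ?thesis
    unfolding compact_support_def compact_eq_bounded_closed using bounded_subset by blast
qed

lemma disc_capacity_pos:
  assumes "3 \<le> CARD('n::finite)"
  shows "0 < disc_capacity TYPE('n)"
proof -
  define V1 where "V1 = measure lborel (cylinder 0 1 :: (real^'n) set)"
  define V2 where "V2 = measure lborel (cylinder (-1) 1 :: (real^'n) set)"
  have "0 < V1" unfolding V1_def by (rule measure_cylinder_pos) simp
  then have pos: "0 < V1 ^ 2 / (17 * (V1 + V2))" by (simp add: V2_def add_pos_nonneg)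
  have "smooth_fun (bump :: real^'n \<Rightarrow> real)" "\<forall>x \<in> flat_disc TYPE('n). bump x = 1"
    by (simp_all add: elementary_smooth_imp_smooth_fun bump_elementary_smooth flat_disc_def bump_eq_1)
  then have "V1 ^ 2 / (17 * (V1 + V2)) \<le> disc_capacity TYPE('n)"
    unfolding disc_capacity_def
    using compact_support_bump energy_lower_bound[OF _ _ _ assms, folded V1_def V2_def]
    by (intro cInf_greatest) blast+
  with pos show ?thesis by linarith
qed

theorem lemma1p2:
  fixes m :: nat
  assumes "CARD('n::finite) \<ge> 2"
  shows "bij_betw (Lmap CARD('n) (disc_capacity TYPE('n))) (domL CARD('n) (disc_capacity TYPE('n)) m) (Gset m)
    \<and> (\<forall>p \<in> Gset m. inv_into (domL CARD('n) (disc_capacity TYPE('n)) m)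
                       (Lmap CARD('n) (disc_capacity TYPE('n))) p = Linv CARD('n) (disc_capacity TYPE('n)) p)"
proof -
  have "2 < CARD('n) \<longrightarrow> 0 < disc_capacity TYPE('n)"
    using disc_capacity_pos[where 'n = 'n] by simp
  from bij_betw_Lmap[OF this] show ?thesis by blast
qed

end
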